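(* There is a unique positive smooth function $\psi$ on $\mathbb{R}$ solving the Cauchy problem $L_0(\psi)=0$, $\psi(0)=1$, $\psi'(0)=0$. Moreover: (1) $\psi(-v)=\psi(v)>0$ for all $v\in\mathbb{R}$; (2) there exist a constant $v_0>0$ large enough and a unique function $R\in L^\infty([v_0,+\infty[)$ with $R(v)=O(|v|^{-2})$ such that $$\psi(v)=c|v|^{\gamma+1}\big(1+R(v)\big)\qquad\text{for all }|v|\geqslant v_0,$$ where $c$ is a positive constant.
   Context: Fix $\gamma>1/2$. Let $\tilde W(v)=\frac{\gamma(\gamma+1)}{1+v^2}$ for $v\in\mathbb{R}$ and let $L_0$ be the differential operator $L_0(\psi)=-\psi''+\tilde W\psi$ on $\mathbb{R}$. *)

theory Defs
  imports "HOL-Analysis.Analysis" "HOL-Library.Landau_Symbols"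
begin

definition Wt :: "real \<Rightarrow> real \<Rightarrow> real" where
  "Wt \<gamma> v = \<gamma> * (\<gamma> + 1) / (1 + v^2)"

definition L0 :: "real \<Rightarrow> (real \<Rightarrow> real) \<Rightarrow> real \<Rightarrow> real" where
  "L0 \<gamma> \<psi> v = - deriv (deriv \<psi>) v + Wt \<gamma> v * \<psi> v"

definition smooth_real :: "(real \<Rightarrow> real) \<Rightarrow> bool" where
  "smooth_real f \<longleftrightarrow> (\<exists>D :: nat \<Rightarrow> real \<Rightarrow> real. D 0 = f \<and>
      (\<forall>n x. (D n has_real_derivative D (Suc n) x) (at x)))"

end

theory Submission
  imports Defs "HOL-Computational_Algebra.Polynomial"
begin

text \<open>
  Write \<open>L0 \<gamma> \<psi> = 0\<close> as \<open>\<psi>'' = W \<psi>\<close> with \<open>W = Wt \<gamma>\<close> continuous, even and \<open>0 \<le> W \<le> \<gamma> (\<gamma> + 1)\<close>.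
  The solution with \<open>\<psi> 0 = 1\<close>, \<open>\<psi>' 0 = 0\<close> is the sum of the Picard iterates of the integral
  equation \<open>\<psi> = 1 + \<integral>\<integral> W \<psi>\<close>; they are all nonnegative, so \<open>\<psi> \<ge> 1\<close>. An energy (Gronwall) estimate gives uniqueness, hence evenness. Every
  derivative of \<open>\<psi>\<close> has the form \<open>(p \<psi> + q \<psi>') / (1 + v\<^sup>2)\<^sup>n\<close> with polynomials \<open>p\<close>, \<open>q\<close>, so \<open>\<psi>\<close>
  is smooth.

  For the asymptotics let \<open>w = 1 + v\<^sup>2\<close> and \<open>r = (\<gamma> + 1) / 2\<close>. The Wronskian of \<open>\<psi>\<close> and a positive
  \<open>\<phi>\<close> has derivative \<open>\<psi> (W \<phi> - \<phi>'')\<close>, so a sign of this defect makes \<open>\<psi> / \<phi>\<close> monotone. The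
  comparison functions \<open>w powr r\<close>, \<open>w powr r * (1 + a / w)\<close> and \<open>w powr r * exp (- b / w)\<close> give
  \<open>m * w powr r \<le> \<psi> \<le> M * w powr r\<close>. Then the Wronskian of \<open>\<psi>\<close> and \<open>w powr r\<close>, whose
  derivative is \<open>(\<gamma>\<^sup>2 - 1) * \<psi> * w powr (r - 2)\<close>, is \<open>O (w powr (\<gamma> - 1/2))\<close> because \<open>\<gamma> > 1/2\<close>, so
  \<open>(\<psi> / w powr r)' = O (w powr (-3/2))\<close> and \<open>\<psi> / w powr r = c + O (1 / w)\<close> with \<open>c \<ge> m / 2\<close>.
\<close>

section \<open>Monotonicity and Gronwall-type estimates\<close>

lemma DERIV_nonneg_imp_le:
  fixes f f' :: "real \<Rightarrow> real"
  assumes "a \<le> b"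
    and "\<And>x. a \<le> x \<Longrightarrow> x \<le> b \<Longrightarrow> (f has_real_derivative f' x) (at x)"
    and "\<And>x. a \<le> x \<Longrightarrow> x \<le> b \<Longrightarrow> f' x \<ge> 0"
  shows "f a \<le> f b"
  using assms(1) by (rule DERIV_nonneg_imp_nondecreasing) (use assms(2,3) in blast)

lemma DERIV_abs_diff_le:
  fixes f f' g g' :: "real \<Rightarrow> real"
  assumes "a \<le> b"
    and f: "\<And>x. a \<le> x \<Longrightarrow> x \<le> b \<Longrightarrow> (f has_real_derivative f' x) (at x)"
    and g: "\<And>x. a \<le> x \<Longrightarrow> x \<le> b \<Longrightarrow> (g has_real_derivative g' x) (at x)"
    and bound: "\<And>x. a \<le> x \<Longrightarrow> x \<le> b \<Longrightarrow> \<bar>f' x\<bar> \<le> g' x"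
  shows "\<bar>f b - f a\<bar> \<le> g b - g a"
proof -
  have "(\<lambda>t. g t - f t) a \<le> (\<lambda>t. g t - f t) b"
    by (rule DERIV_nonneg_imp_le[OF \<open>a \<le> b\<close> DERIV_diff[OF g f]]) (use bound in force)+
  moreover have "(\<lambda>t. g t + f t) a \<le> (\<lambda>t. g t + f t) b"
    by (rule DERIV_nonneg_imp_le[OF \<open>a \<le> b\<close> DERIV_add[OF g f]]) (use bound in force)+
  ultimately show ?thesis by simp
qed

lemma DERIV_abs_le_power_bound:
  fixes f f' :: "real \<Rightarrow> real"
  assumes "f 0 = 0" and f: "\<And>x. (f has_real_derivative f' x) (at x)"
    and bound: "\<And>x. \<bar>f' x\<bar> \<le> c * \<bar>x\<bar> ^ m"
  shows "\<bar>f x\<bar> \<le> c * \<bar>x\<bar> ^ Suc m / Suc m"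
proof (cases "x \<ge> 0")
  case True
  have "\<bar>f x - f 0\<bar> \<le> (\<lambda>t. c * t ^ Suc m / Suc m) x - (\<lambda>t. c * t ^ Suc m / Suc m) 0"
  proof (rule DERIV_abs_diff_le[OF True f])
    show "((\<lambda>t. c * t ^ Suc m / Suc m) has_real_derivative c * t ^ m) (at t)" for t
      using DERIV_cdivide[OF DERIV_cmult[OF DERIV_pow[of "Suc m" t]], of c "Suc m"]
      by (simp del: of_nat_Suc)
    show "\<bar>f' t\<bar> \<le> c * t ^ m" if "0 \<le> t" for t
      using bound[of t] that by simp
  qed
  then show ?thesis using True \<open>f 0 = 0\<close> by simp
next
  case False
  have "\<bar>f 0 - f x\<bar> \<le> (\<lambda>t. - c * (- t) ^ Suc m / Suc m) 0 - (\<lambda>t. - c * (- t) ^ Suc m / Suc m) x"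
  proof (rule DERIV_abs_diff_le[of x 0 f f' _ "\<lambda>t. c * (- t) ^ m"])
    show "((\<lambda>t. - c * (- t) ^ Suc m / Suc m) has_real_derivative c * (- t) ^ m) (at t)" for t
      using DERIV_cdivide[OF DERIV_cmult[OF DERIV_chain2[OF DERIV_pow[of "Suc m" "- t"]
          DERIV_minus[OF DERIV_ident]]], of "- c" "Suc m"]
      by (simp del: of_nat_Suc)
    show "\<bar>f' t\<bar> \<le> c * (- t) ^ m" if "t \<le> 0" for t
      using bound[of t] that by simp
    show "x \<le> 0" using False by simp
    show "(f has_real_derivative f' t) (at t)" for t by (rule f)
  qed
  moreover have "\<bar>x\<bar> = - x" using False by simp
  ultimately show ?thesis using \<open>f 0 = 0\<close> by simp
qed

lemma DERIV2_nonneg_imp_nonneg: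
  fixes f f' f'' :: "real \<Rightarrow> real"
  assumes f: "\<And>x. (f has_real_derivative f' x) (at x)"
    and f': "\<And>x. (f' has_real_derivative f'' x) (at x)"
    and "\<And>x. f'' x \<ge> 0" and "f 0 = 0" and "f' 0 = 0"
  shows "f x \<ge> 0"
proof -
  have f'_mono: "f' s \<le> f' t" if "s \<le> t" for s t
    using that f' assms(3) by (rule DERIV_nonneg_imp_le)
  show ?thesis
  proof (cases "x \<ge> 0")
    case True
    have "f 0 \<le> f x"
      using True f by (rule DERIV_nonneg_imp_le) (metis f'_mono \<open>f' 0 = 0\<close>)
    then show ?thesis using \<open>f 0 = 0\<close> by simp
  next
    case False
    then have "x \<le> 0" by simp
    have "(\<lambda>t. - f t) x \<le> (\<lambda>t. - f t) 0"
      using \<open>x \<le> 0\<close> DERIV_minus[OF f] by (rule DERIV_nonneg_imp_le)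
        (metis f'_mono \<open>f' 0 = 0\<close> neg_0_le_iff_le)
    then show ?thesis using \<open>f 0 = 0\<close> by simp
  qed
qed

lemma gronwall_zero:
  fixes E E' :: "real \<Rightarrow> real"
  assumes E: "\<And>t. (E has_real_derivative E' t) (at t)"
    and growth: "\<And>t. \<bar>E' t\<bar> \<le> L * E t"
    and "\<And>t. E t \<ge> 0" and "E 0 = 0"
  shows "E t = 0"
proof -
  have "E t \<le> 0"
  proof (cases "t \<ge> 0")
    case True
    have "(\<lambda>t. - (E t * exp (- L * t))) 0 \<le> (\<lambda>t. - (E t * exp (- L * t))) t"
    proof (rule DERIV_nonneg_imp_le[OF True])
      show "((\<lambda>t. - (E t * exp (- L * t))) has_real_derivative (L * E s - E' s) * exp (- L * s)) (at s)"
        for s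
        using E[of s] by (auto intro!: derivative_eq_intros simp: algebra_simps)
      show "(L * E s - E' s) * exp (- L * s) \<ge> 0" for s
        using growth[of s] by simp
    qed
    then show ?thesis using \<open>E 0 = 0\<close> by (simp add: mult_le_0_iff)
  next
    case False
    have "(\<lambda>t. E t * exp (L * t)) t \<le> (\<lambda>t. E t * exp (L * t)) 0"
    proof (rule DERIV_nonneg_imp_le[of t 0 "\<lambda>t. E t * exp (L * t)"])
      show "((\<lambda>t. E t * exp (L * t)) has_real_derivative (E' s + L * E s) * exp (L * s)) (at s)" for s
        using E[of s] by (auto intro!: derivative_eq_intros simp: algebra_simps)
      show "(E' s + L * E s) * exp (L * s) \<ge> 0" for s
        using growth[of s] by simp
    qed (use False in simp)
    then show ?thesis using \<open>E 0 = 0\<close> by (simp add: mult_le_0_iff)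
  qed
  then show ?thesis using assms(3)[of t] by simp
qed

lemma DERIV_dominated_imp_limit_bound:
  fixes f f' h h' :: "real \<Rightarrow> real"
  assumes f: "\<And>x. x \<ge> a \<Longrightarrow> (f has_real_derivative f' x) (at x)"
    and h: "\<And>x. x \<ge> a \<Longrightarrow> (h has_real_derivative h' x) (at x)"
    and bound: "\<And>x. x \<ge> a \<Longrightarrow> \<bar>f' x\<bar> \<le> - h' x"
    and h_nonneg: "\<And>x. x \<ge> a \<Longrightarrow> h x \<ge> 0"
  shows "\<exists>c. \<forall>x\<ge>a. \<bar>f x - c\<bar> \<le> h x"
proof -
  have step: "\<bar>f t - f s\<bar> \<le> h s - h t" if "a \<le> s" "s \<le> t" for s t
  proof -
    have "\<bar>f t - f s\<bar> \<le> (\<lambda>x. - h x) t - (\<lambda>x. - h x) s"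
      by (rule DERIV_abs_diff_le[OF that(2), of f f' _ "\<lambda>x. - h' x"])
        (use that in \<open>auto intro!: f DERIV_minus h bound\<close>)
    then show ?thesis by simp
  qed
  have squeeze: "f u - h u \<le> f x + h x" if "a \<le> u" "a \<le> x" for u x
    using step[of u x] step[of x u] h_nonneg[of u] h_nonneg[of x] that
    by (cases "u \<le> x") auto
  define c where "c = Inf ((\<lambda>x. f x + h x) ` {a..})"
  have bdd: "bdd_below ((\<lambda>x. f x + h x) ` {a..})"
    by (rule bdd_belowI[of _ "f a - h a"]) (use squeeze[of a] in auto)
  have bounds: "c \<le> f u + h u" "f u - h u \<le> c" if "a \<le> u" for u
    unfolding c_def using that bdd squeeze[OF that]
    by (auto intro!: cInf_lower cInf_greatest)
  have "\<bar>f u - c\<bar> \<le> h u" if "a \<le> u" for u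
    using bounds[OF that] unfolding abs_le_iff by linarith
  then show ?thesis by blast
qed

section \<open>The zero-energy Schroedinger equation\<close>

definition schroedinger_solution :: "(real \<Rightarrow> real) \<Rightarrow> (real \<Rightarrow> real) \<Rightarrow> (real \<Rightarrow> real) \<Rightarrow> bool"
  where "schroedinger_solution W f f' \<longleftrightarrow>
    (\<forall>x. (f has_real_derivative f' x) (at x)) \<and> (\<forall>x. (f' has_real_derivative W x * f x) (at x))"

lemma schroedinger_solution_diff:
  assumes "schroedinger_solution W f f'" and "schroedinger_solution W g g'"
  shows "schroedinger_solution W (\<lambda>x. f x - g x) (\<lambda>x. f' x - g' x)"
proof -
  have "((\<lambda>x. f' x - g' x) has_real_derivative W x * f x - W x * g x) (at x)" for x
    using assms by (intro DERIV_diff) (auto simp: schroedinger_solution_def)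
  then show ?thesis
    using assms by (auto simp: schroedinger_solution_def right_diff_distrib intro!: DERIV_diff)
qed

lemma schroedinger_solution_reflect:
  assumes "\<And>x. W (- x) = W x" and "schroedinger_solution W f f'"
  shows "schroedinger_solution W (\<lambda>x. f (- x)) (\<lambda>x. - f' (- x))"
proof -
  have f: "(f has_real_derivative f' x) (at x)" and f': "(f' has_real_derivative W x * f x) (at x)" for x
    using assms(2) by (auto simp: schroedinger_solution_def)
  have "((\<lambda>x. f (- x)) has_real_derivative - f' (- x)) (at x)" for x
    using DERIV_chain2[OF f DERIV_minus[OF DERIV_ident]] by simp
  moreover have "((\<lambda>x. - f' (- x)) has_real_derivative W x * f (- x)) (at x)" for x
    using DERIV_minus[OF DERIV_chain2[OF f' DERIV_minus[OF DERIV_ident]]] assms(1) by simp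
  ultimately show ?thesis by (simp add: schroedinger_solution_def)
qed

lemma schroedinger_solution_eq_0:
  assumes "schroedinger_solution W f f'" and W_bound: "\<And>x. \<bar>W x\<bar> \<le> k"
    and "f 0 = 0" and "f' 0 = 0"
  shows "f x = 0"
proof -
  have f: "(f has_real_derivative f' x) (at x)" and f': "(f' has_real_derivative W x * f x) (at x)" for x
    using assms(1) by (auto simp: schroedinger_solution_def)
  define E where "E t = f t * f t + f' t * f' t" for t
  have "E x = 0"
  proof (rule gronwall_zero[of E])
    fix t
    have "(E has_real_derivative f' t * f t + f' t * f t + (W t * f t * f' t + W t * f t * f' t)) (at t)"
      unfolding E_def[abs_def] by (intro DERIV_add DERIV_mult f f')
    then show "(E has_real_derivative 2 * (f t * f' t) * (1 + W t)) (at t)"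
      by (simp add: algebra_simps)
    have "2 * \<bar>f t * f' t\<bar> \<le> E t"
      using sum_squares_bound[of "\<bar>f t\<bar>" "\<bar>f' t\<bar>"] by (simp add: E_def abs_mult power2_eq_square)
    moreover have "\<bar>1 + W t\<bar> \<le> 1 + k"
      using W_bound[of t] by linarith
    ultimately have "2 * \<bar>f t * f' t\<bar> * \<bar>1 + W t\<bar> \<le> E t * (1 + k)"
      by (rule mult_mono) (simp_all add: E_def)
    then show "\<bar>2 * (f t * f' t) * (1 + W t)\<bar> \<le> (1 + k) * E t"
      by (simp add: abs_mult mult.commute)
    show "E t \<ge> 0"
      by (simp add: E_def)
  qed (simp add: E_def assms)
  then show ?thesis by (simp add: E_def)
qed

lemma schroedinger_solution_if_L0_eq_0:
  assumes "smooth_real \<psi>" and "\<And>v. L0 \<gamma> \<psi> v = 0"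
  shows "schroedinger_solution (Wt \<gamma>) \<psi> (deriv \<psi>)"
proof -
  obtain D where "D 0 = \<psi>" and D: "\<And>n x. (D n has_real_derivative D (Suc n) x) (at x)"
    using assms(1) unfolding smooth_real_def by blast
  have "deriv (D n) = D (Suc n)" for n
    using D by (auto simp: fun_eq_iff intro: DERIV_imp_deriv)
  then show ?thesis
    using assms(2) D \<open>D 0 = \<psi>\<close> by (auto simp: schroedinger_solution_def L0_def)
qed

lemma L0_eq_0_if_schroedinger_solution:
  assumes "schroedinger_solution (Wt \<gamma>) \<psi> \<psi>'"
  shows "L0 \<gamma> \<psi> v = 0" and "deriv \<psi> = \<psi>'"
proof -
  show "deriv \<psi> = \<psi>'"
    using assms by (auto simp: fun_eq_iff schroedinger_solution_def intro: DERIV_imp_deriv)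
  then have "deriv (deriv \<psi>) v = Wt \<gamma> v * \<psi> v"
    using assms by (simp add: schroedinger_solution_def DERIV_imp_deriv)
  then show "L0 \<gamma> \<psi> v = 0"
    by (simp add: L0_def)
qed

section \<open>Existence by Picard iteration\<close>

lemma has_real_derivative_series_locally_bounded:
  fixes f f' :: "nat \<Rightarrow> real \<Rightarrow> real"
  assumes f: "\<And>n x. (f n has_real_derivative f' n x) (at x)"
    and bounded: "\<And>T. \<exists>M. summable M \<and> (\<forall>n y. \<bar>y\<bar> \<le> T \<longrightarrow> \<bar>f' n y\<bar> \<le> M n)"
    and "summable (\<lambda>n. f n 0)"
  shows "summable (\<lambda>n. f n x)"
    and "((\<lambda>x. \<Sum>n. f n x) has_real_derivative (\<Sum>n. f' n x)) (at x)"
proof -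
  define S where "S = ball (0::real) (\<bar>x\<bar> + 1)"
  obtain M where "summable M" and M: "\<And>n y. \<bar>y\<bar> \<le> \<bar>x\<bar> + 1 \<Longrightarrow> \<bar>f' n y\<bar> \<le> M n"
    using bounded by blast
  have "uniformly_convergent_on S (\<lambda>n x. \<Sum>i<n. f' i x)"
    by (rule Weierstrass_m_test'[OF _ \<open>summable M\<close>]) (auto simp: S_def intro!: M)
  moreover have "x \<in> interior S" "0 \<in> S" "convex S"
    by (auto simp: S_def)
  moreover have "(f n has_field_derivative f' n y) (at y within S)" for n y
    using f by (rule has_field_derivative_at_within)
  ultimately show "summable (\<lambda>n. f n x)"
    and "((\<lambda>x. \<Sum>n. f n x) has_real_derivative (\<Sum>n. f' n x)) (at x)"
    using has_field_derivative_series'[of S f f' 0 x] \<open>summable (\<lambda>n. f n 0)\<close> by auto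
qed

definition antideriv :: "(real \<Rightarrow> real) \<Rightarrow> real \<Rightarrow> real" where
  "antideriv g = (SOME G. G 0 = 0 \<and> (\<forall>x. (G has_real_derivative g x) (at x)))"

lemma
  assumes "continuous_on UNIV g"
  shows antideriv_at_0: "antideriv g 0 = 0"
    and antideriv_has_derivative: "(antideriv g has_real_derivative g x) (at x)"
proof -
  obtain F where F: "\<And>x. (F has_vector_derivative g x) (at x)"
    using einterval_antiderivative[of "-\<infinity>" "\<infinity>" g] assms
    by (auto simp: continuous_on_eq_continuous_at)
  have "\<exists>G. G 0 = 0 \<and> (\<forall>x. (G has_real_derivative g x) (at x))"
    using F by (intro exI[of _ "\<lambda>x. F x - F 0"])
      (auto intro!: derivative_eq_intros simp: has_real_derivative_iff_has_vector_derivative)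
  then have "antideriv g 0 = 0 \<and> (\<forall>x. (antideriv g has_real_derivative g x) (at x))"
    unfolding antideriv_def by (rule someI_ex)
  then show "antideriv g 0 = 0" and "(antideriv g has_real_derivative g x) (at x)"
    by auto
qed

primrec picard :: "(real \<Rightarrow> real) \<Rightarrow> nat \<Rightarrow> real \<Rightarrow> real" where
  "picard W 0 = (\<lambda>_. 1)"
| "picard W (Suc n) = antideriv (antideriv (\<lambda>x. W x * picard W n x))"

definition picard_deriv :: "(real \<Rightarrow> real) \<Rightarrow> nat \<Rightarrow> real \<Rightarrow> real" where
  "picard_deriv W n = (case n of 0 \<Rightarrow> (\<lambda>_. 0) | Suc m \<Rightarrow> antideriv (\<lambda>x. W x * picard W m x))"

lemma picard_deriv_0 [simp]: "picard_deriv W 0 = (\<lambda>_. 0)"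
  by (simp add: picard_deriv_def)

definition picard_solution :: "(real \<Rightarrow> real) \<Rightarrow> real \<Rightarrow> real"
  where "picard_solution W x = (\<Sum>n. picard W n x)"

definition picard_solution_deriv :: "(real \<Rightarrow> real) \<Rightarrow> real \<Rightarrow> real"
  where "picard_solution_deriv W x = (\<Sum>n. picard_deriv W (Suc n) x)"

lemma summable_exp_scaled: "summable (\<lambda>n. c * a ^ n / fact n :: real)"
  using summable_mult[OF summable_exp[of a], of c] by (simp add: field_simps)

context
  fixes W :: "real \<Rightarrow> real"
  assumes W_cont: "continuous_on UNIV W"
begin

lemma picard_has_derivative: "(picard W n has_real_derivative picard_deriv W n x) (at x)"
proof (induction n arbitrary: x)
  case 0
  then show ?case by (simp add: picard_deriv_def)
next
  case (Suc n)
  have "continuous_on UNIV (picard W n)"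
    using Suc.IH by (intro DERIV_continuous_on) auto
  then have "continuous_on UNIV (\<lambda>x. W x * picard W n x)"
    using W_cont by (intro continuous_intros)
  then have "continuous_on UNIV (antideriv (\<lambda>x. W x * picard W n x))"
    using antideriv_has_derivative by (intro DERIV_continuous_on) auto
  then show ?case
    by (simp add: picard_deriv_def antideriv_has_derivative)
qed

lemma picard_deriv_Suc_has_derivative:
  "(picard_deriv W (Suc n) has_real_derivative W x * picard W n x) (at x)"
proof -
  have "continuous_on UNIV (picard W n)"
    using picard_has_derivative by (intro DERIV_continuous_on) auto
  then show ?thesis
    unfolding picard_deriv_def using W_cont by (auto intro!: antideriv_has_derivative continuous_intros)
qed

lemma picard_at_0: "picard W n 0 = (if n = 0 then 1 else 0)"
  and picard_deriv_at_0: "picard_deriv W n 0 = 0"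
proof -
  have "continuous_on UNIV (picard_deriv W (Suc n))" for n
    using picard_deriv_Suc_has_derivative by (intro DERIV_continuous_on) auto
  moreover have "continuous_on UNIV (picard W n)" for n
    using picard_has_derivative by (intro DERIV_continuous_on) auto
  ultimately show "picard W n 0 = (if n = 0 then 1 else 0)" "picard_deriv W n 0 = 0"
    using W_cont by (cases n; simp add: picard_deriv_def antideriv_at_0 continuous_intros)+
qed

context
  fixes k :: real
  assumes W_bound: "\<And>x. \<bar>W x\<bar> \<le> k"
begin

lemma bound_nonneg: "k \<ge> 0"
  using W_bound[of 0] by linarith

lemma picard_deriv_bound_step:
  assumes "\<And>x. \<bar>picard W n x\<bar> \<le> k ^ n * x ^ (2 * n) / fact n"
  shows "\<bar>picard_deriv W (Suc n) x\<bar> \<le> k ^ Suc n / fact n * \<bar>x\<bar> ^ Suc (2 * n) / Suc (2 * n)"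
proof (rule DERIV_abs_le_power_bound[OF picard_deriv_at_0 picard_deriv_Suc_has_derivative])
  fix y
  have "\<bar>W y * picard W n y\<bar> \<le> k * (k ^ n * y ^ (2 * n) / fact n)"
    unfolding abs_mult using W_bound assms by (rule mult_mono) (use bound_nonneg in auto)
  then show "\<bar>W y * picard W n y\<bar> \<le> k ^ Suc n / fact n * \<bar>y\<bar> ^ (2 * n)"
    by (simp add: power_even_abs)
qed

lemma picard_bound: "\<bar>picard W n x\<bar> \<le> k ^ n * x ^ (2 * n) / fact n"
proof (induction n arbitrary: x)
  case 0
  then show ?case by simp
next
  case (Suc n)
  have "\<bar>picard W (Suc n) x\<bar>
      \<le> k ^ Suc n / fact n / Suc (2 * n) * \<bar>x\<bar> ^ Suc (Suc (2 * n)) / Suc (Suc (2 * n))"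
  proof (rule DERIV_abs_le_power_bound[OF _ picard_has_derivative])
    show "picard W (Suc n) 0 = 0" using picard_at_0[of "Suc n"] by simp
    show "\<bar>picard_deriv W (Suc n) y\<bar> \<le> k ^ Suc n / fact n / Suc (2 * n) * \<bar>y\<bar> ^ Suc (2 * n)" for y
      using picard_deriv_bound_step[OF Suc.IH, of y] by (simp only: times_divide_eq_left)
  qed
  also have "\<dots> = k ^ Suc n * x ^ (2 * Suc n) / fact n / (Suc (2 * n) * Suc (Suc (2 * n)))"
  proof -
    have "\<bar>x\<bar> ^ Suc (Suc (2 * n)) = x ^ (2 * Suc n)"
      using power_even_abs[of "2 * Suc n" x] by simp
    then show ?thesis by (simp only: times_divide_eq_left divide_divide_eq_left of_nat_mult mult.assoc)
  qed
  also have "\<dots> \<le> k ^ Suc n * x ^ (2 * Suc n) / fact n / Suc n"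
  proof (rule divide_left_mono)
    show "0 \<le> k ^ Suc n * x ^ (2 * Suc n) / fact n"
      using bound_nonneg by (intro divide_nonneg_nonneg mult_nonneg_nonneg zero_le_power zero_le_even_power') simp_all
  qed (simp_all del: of_nat_Suc of_nat_mult add: of_nat_mult[symmetric])
  also have "\<dots> = k ^ Suc n * x ^ (2 * Suc n) / fact (Suc n)"
    by (simp add: divide_divide_eq_left)
  finally show ?case .
qed

lemma picard_deriv_bound: "\<bar>picard_deriv W (Suc n) x\<bar> \<le> k ^ Suc n * \<bar>x\<bar> ^ Suc (2 * n) / fact n"
proof -
  have "\<bar>picard_deriv W (Suc n) x\<bar> \<le> k ^ Suc n / fact n * \<bar>x\<bar> ^ Suc (2 * n) / Suc (2 * n)"
    using picard_bound by (rule picard_deriv_bound_step)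
  also have "\<dots> \<le> k ^ Suc n / fact n * \<bar>x\<bar> ^ Suc (2 * n) / 1"
    using bound_nonneg by (intro divide_left_mono) auto
  finally show ?thesis by simp
qed

lemma picard_summable_bounds:
  "\<exists>M. summable M \<and> (\<forall>n y. \<bar>y\<bar> \<le> T \<longrightarrow> \<bar>picard_deriv W n y\<bar> \<le> M n)"
  "\<exists>M. summable M \<and> (\<forall>n y. \<bar>y\<bar> \<le> T \<longrightarrow> \<bar>W y * picard W n y\<bar> \<le> M n)"
proof -
  have le_T: "\<bar>y\<bar> ^ j \<le> T ^ j" if "\<bar>y\<bar> \<le> T" for y j
    using that by (intro power_mono) auto
  define M where "M n = (case n of 0 \<Rightarrow> 0 | Suc m \<Rightarrow> k * T * (k * T\<^sup>2) ^ m / fact m)" for n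
  have "summable M"
    using summable_exp_scaled[of "k * T" "k * T\<^sup>2"] by (subst summable_Suc_iff[symmetric]) (simp add: M_def)
  moreover have "\<bar>picard_deriv W n y\<bar> \<le> M n" if "\<bar>y\<bar> \<le> T" for n y
  proof (cases n)
    case (Suc m)
    have "\<bar>picard_deriv W (Suc m) y\<bar> \<le> k ^ Suc m * \<bar>y\<bar> ^ Suc (2 * m) / fact m"
      by (rule picard_deriv_bound)
    also have "\<dots> \<le> k ^ Suc m * T ^ Suc (2 * m) / fact m"
      using le_T[OF that, of "Suc (2 * m)"] bound_nonneg by (intro divide_right_mono mult_left_mono) auto
    also have "\<dots> = M n"
    proof -
      have "T ^ Suc (2 * m) = T * (T\<^sup>2) ^ m" by (metis power_Suc power_mult)
      then show ?thesis unfolding Suc M_def nat.case by (simp only: power_Suc power_mult_distrib mult_ac)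
    qed
    finally show ?thesis by (simp add: Suc)
  qed (simp add: picard_deriv_def M_def)
  ultimately show "\<exists>M. summable M \<and> (\<forall>n y. \<bar>y\<bar> \<le> T \<longrightarrow> \<bar>picard_deriv W n y\<bar> \<le> M n)"
    by blast
  have "\<bar>W y * picard W n y\<bar> \<le> k * (k * T\<^sup>2) ^ n / fact n" if "\<bar>y\<bar> \<le> T" for n y
  proof -
    have "\<bar>W y * picard W n y\<bar> \<le> k * (k ^ n * y ^ (2 * n) / fact n)"
      unfolding abs_mult using W_bound picard_bound bound_nonneg by (intro mult_mono) auto
    also have "\<dots> \<le> k * (k ^ n * T ^ (2 * n) / fact n)"
      using le_T[OF that, of "2 * n"] bound_nonneg
      by (intro mult_left_mono divide_right_mono) (auto simp: power_even_abs)
    finally show ?thesis by (simp add: power_mult power_mult_distrib)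
  qed
  then show "\<exists>M. summable M \<and> (\<forall>n y. \<bar>y\<bar> \<le> T \<longrightarrow> \<bar>W y * picard W n y\<bar> \<le> M n)"
    using summable_exp_scaled by blast
qed

lemma picard_solution_summable: "summable (\<lambda>n. picard W n x)"
proof (rule has_real_derivative_series_locally_bounded(1)[OF picard_has_derivative picard_summable_bounds(1)])
  show "summable (\<lambda>n. picard W n 0)"
    using summable_single[of 0 "\<lambda>_. 1 :: real"] by (simp add: picard_at_0 if_distrib)
qed

lemma schroedinger_solution_picard: "schroedinger_solution W (picard_solution W) (picard_solution_deriv W)"
  and picard_solution_at_0: "picard_solution W 0 = 1"
  and picard_solution_deriv_at_0: "picard_solution_deriv W 0 = 0"
proof -
  have "(\<lambda>n. picard W n 0) sums 1"
    using sums_single[of 0 "\<lambda>_. 1 :: real"] by (simp add: picard_at_0 if_distrib)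
  then show "picard_solution W 0 = 1" by (simp add: picard_solution_def sums_iff)
  show "picard_solution_deriv W 0 = 0" by (simp add: picard_solution_deriv_def picard_deriv_at_0)
  note series = has_real_derivative_series_locally_bounded
  have picard_solution_has_derivative:
    "(picard_solution W has_real_derivative (\<Sum>n. picard_deriv W n x)) (at x)" for x
    using series(2)[OF picard_has_derivative picard_summable_bounds(1)] \<open>(\<lambda>n. picard W n 0) sums 1\<close>
    by (auto simp: sums_iff picard_solution_def[abs_def])
  have "summable (\<lambda>n. picard_deriv W (Suc n) 0)"
    by (simp add: picard_deriv_at_0)
  note deriv_series = series[OF picard_deriv_Suc_has_derivative picard_summable_bounds(2) this]
  have "(\<Sum>n. picard_deriv W n x) = picard_solution_deriv W x" for x
  proof -
    have "summable (\<lambda>n. picard_deriv W n x)"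
      using deriv_series(1)[of x] by (subst summable_Suc_iff[symmetric])
    then show ?thesis
      using suminf_split_head[of "\<lambda>n. picard_deriv W n x"] by (simp add: picard_solution_deriv_def)
  qed
  moreover have "(\<Sum>n. W x * picard W n x) = W x * picard_solution W x" for x
    using suminf_mult[OF picard_solution_summable[of x]] by (simp add: picard_solution_def)
  ultimately show "schroedinger_solution W (picard_solution W) (picard_solution_deriv W)"
    using picard_solution_has_derivative deriv_series(2)
    unfolding schroedinger_solution_def picard_solution_deriv_def[abs_def] by auto
qed

lemma picard_solution_ge_1:
  assumes "\<And>x. W x \<ge> 0"
  shows "picard_solution W x \<ge> 1"
proof -
  have nonneg: "picard W n x \<ge> 0" for n x
  proof (induction n arbitrary: x)
    case (Suc n)
    show ?case
      using picard_has_derivative picard_deriv_Suc_has_derivative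
      by (rule DERIV2_nonneg_imp_nonneg)
        (use Suc.IH assms picard_at_0[of "Suc n"] picard_deriv_at_0 in \<open>auto simp del: picard.simps\<close>)
  qed simp
  have "(\<Sum>n<1. picard W n x) \<le> picard_solution W x"
    unfolding picard_solution_def
    by (rule sum_le_suminf[OF picard_solution_summable]) (auto intro: nonneg)
  then show ?thesis by simp
qed

end

end

section \<open>Smoothness\<close>

text \<open>The recursion comes from differentiating \<open>(p f + q f') / (1 + x\<^sup>2)\<^sup>n\<close> and eliminating
  \<open>f''\<close> by \<open>f'' = k f / (1 + x\<^sup>2)\<close>.\<close>

primrec deriv_coeffs :: "real \<Rightarrow> nat \<Rightarrow> real poly \<times> real poly" where
  "deriv_coeffs k 0 = (1, 0)"
| "deriv_coeffs k (Suc n) = (case deriv_coeffs k n of (p, q) \<Rightarrow>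
     (pderiv p * [:1, 0, 1:] + smult k q - smult (2 * real n) ([:0, 1:] * p),
      (p + pderiv q) * [:1, 0, 1:] - smult (2 * real n) ([:0, 1:] * q)))"

definition higher_deriv :: "real \<Rightarrow> (real \<Rightarrow> real) \<Rightarrow> (real \<Rightarrow> real) \<Rightarrow> nat \<Rightarrow> real \<Rightarrow> real" where
  "higher_deriv k f f' n x =
    (case deriv_coeffs k n of (p, q) \<Rightarrow> (poly p x * f x + poly q x * f' x) / (1 + x\<^sup>2) ^ n)"

lemma higher_deriv_has_derivative:
  assumes "schroedinger_solution (\<lambda>x. k / (1 + x\<^sup>2)) f f'"
  shows "(higher_deriv k f f' n has_real_derivative higher_deriv k f f' (Suc n) x) (at x)"
proof -
  have f: "(f has_real_derivative f' x) (at x)" and f': "(f' has_real_derivative k / (1 + x\<^sup>2) * f x) (at x)"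
    for x using assms by (auto simp: schroedinger_solution_def)
  obtain p q where pq: "deriv_coeffs k n = (p, q)" by fastforce
  have "1 + x\<^sup>2 > 0"
    by (simp add: add_pos_nonneg)
  then have w: "1 + x\<^sup>2 \<noteq> 0" "1 + x * x \<noteq> 0"
    by (simp_all add: power2_eq_square)
  show ?thesis
    unfolding higher_deriv_def[abs_def] pq
    apply (rule derivative_eq_intros refl poly_DERIV f f' | simp add: w)+
    apply (simp add: pq)
    apply (cases n)
     apply (simp add: field_simps power2_eq_square w)
    apply (simp add: divide_simps power2_eq_square w)
    apply (simp add: algebra_simps)
    done
qed

lemma smooth_real_if_schroedinger_solution:
  assumes "schroedinger_solution (\<lambda>x. k / (1 + x\<^sup>2)) f f'"
  shows "smooth_real f"
  unfolding smooth_real_def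
proof (intro exI conjI allI)
  show "higher_deriv k f f' 0 = f"
    by (simp add: higher_deriv_def fun_eq_iff)
  show "(higher_deriv k f f' n has_real_derivative higher_deriv k f f' (Suc n) x) (at x)" for n x
    using assms by (rule higher_deriv_has_derivative)
qed

section \<open>Sturm comparison with radial functions\<close>

lemma DERIV_powr_over_power:
  assumes "w > 0"
  shows "((\<lambda>w. w powr r / w ^ j) has_real_derivative (r - j) * w powr r / w ^ Suc j) (at w)"
proof -
  have "((\<lambda>w. w powr r / w ^ j) has_real_derivative
      (r * w powr (r - 1) * w ^ j - w powr r * (j * w ^ (j - 1))) / (w ^ j * w ^ j)) (at w)"
    using assms by (intro DERIV_divide DERIV_pow has_real_derivative_powr) auto
  moreover have "(r * w powr (r - 1) * w ^ j - w powr r * (j * w ^ (j - 1))) / (w ^ j * w ^ j)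
      = (r - j) * w powr r / w ^ Suc j"
  proof -
    have e1: "w powr (r - 1) = w powr r / w"
      using assms by (simp add: powr_diff)
    have e2: "j * w ^ (j - 1) = j * w ^ j / w"
      using assms by (cases j) auto
    show ?thesis
      unfolding e1 e2 using assms by (simp add: field_simps)
  qed
  ultimately show ?thesis by simp
qed

lemma wronskian_has_derivative:
  assumes "schroedinger_solution W \<psi> \<psi>'"
    and \<phi>: "(\<phi> has_real_derivative \<phi>' x) (at x)" and \<phi>': "(\<phi>' has_real_derivative \<phi>'' x) (at x)"
  shows "((\<lambda>x. \<psi>' x * \<phi> x - \<psi> x * \<phi>' x) has_real_derivative \<psi> x * (W x * \<phi> x - \<phi>'' x)) (at x)"
proof -
  have \<psi>: "(\<psi> has_real_derivative \<psi>' x) (at x)" and \<psi>': "(\<psi>' has_real_derivative W x * \<psi> x) (at x)"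
    using assms(1) by (auto simp: schroedinger_solution_def)
  have "((\<lambda>x. \<psi>' x * \<phi> x - \<psi> x * \<phi>' x) has_real_derivative
      W x * \<psi> x * \<phi> x + \<phi>' x * \<psi>' x - (\<psi>' x * \<phi>' x + \<phi>'' x * \<psi> x)) (at x)"
    by (intro DERIV_diff DERIV_mult \<psi> \<psi>' \<phi> \<phi>')
  then show ?thesis by (simp add: algebra_simps)
qed

lemma sturm_comparison:
  assumes sol: "schroedinger_solution W \<psi> \<psi>'" and "\<psi>' 0 = 0"
    and \<psi>_nonneg: "\<And>x. x \<ge> 0 \<Longrightarrow> \<psi> x \<ge> 0"
    and \<phi>: "\<And>x. (\<phi> has_real_derivative \<phi>' x) (at x)" and \<phi>': "\<And>x. (\<phi>' has_real_derivative \<phi>'' x) (at x)"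
    and "\<phi>' 0 = 0" and \<phi>_pos: "\<And>x. x \<ge> 0 \<Longrightarrow> \<phi> x > 0"
    and defect: "\<And>x. x \<ge> 0 \<Longrightarrow> s * (W x * \<phi> x - \<phi>'' x) \<ge> 0"
    and "v \<ge> 0"
  shows "s * (\<psi> v / \<phi> v) \<ge> s * (\<psi> 0 / \<phi> 0)"
proof -
  define wr where "wr x = \<psi>' x * \<phi> x - \<psi> x * \<phi>' x" for x
  have wr_nonneg: "s * wr x \<ge> 0" if "x \<ge> 0" for x
  proof -
    have "s * wr 0 \<le> s * wr x"
    proof (rule DERIV_nonneg_imp_le[OF that, of "\<lambda>x. s * wr x"])
      show "((\<lambda>x. s * wr x) has_real_derivative s * (\<psi> y * (W y * \<phi> y - \<phi>'' y))) (at y)" for y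
        unfolding wr_def by (intro DERIV_cmult wronskian_has_derivative sol \<phi> \<phi>')
      show "s * (\<psi> y * (W y * \<phi> y - \<phi>'' y)) \<ge> 0" if "0 \<le> y" for y
        using mult_nonneg_nonneg[OF \<psi>_nonneg defect, OF that that] by (simp add: ac_simps)
    qed
    then show ?thesis by (simp add: wr_def \<open>\<psi>' 0 = 0\<close> \<open>\<phi>' 0 = 0\<close>)
  qed
  have \<psi>: "(\<psi> has_real_derivative \<psi>' x) (at x)" for x
    using sol by (simp add: schroedinger_solution_def)
  have "(\<lambda>x. s * (\<psi> x / \<phi> x)) 0 \<le> (\<lambda>x. s * (\<psi> x / \<phi> x)) v"
  proof (rule DERIV_nonneg_imp_le[OF \<open>v \<ge> 0\<close>])
    fix x :: real assume "0 \<le> x"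
    then have "\<phi> x \<noteq> 0" using \<phi>_pos[of x] by simp
    then show "((\<lambda>x. s * (\<psi> x / \<phi> x)) has_real_derivative s * wr x / (\<phi> x)\<^sup>2) (at x)"
      using DERIV_cmult[OF DERIV_divide[OF \<psi> \<phi>], of x s]
      by (simp add: wr_def power2_eq_square)
    show "s * wr x / (\<phi> x)\<^sup>2 \<ge> 0"
      using wr_nonneg[OF \<open>0 \<le> x\<close>] by simp
  qed
  then show ?thesis by simp
qed

text \<open>The defect \<open>Wt \<gamma> v * \<phi> v - \<phi>'' v\<close> of \<open>\<phi> v = \<Phi> (1 + v\<^sup>2)\<close>, written in \<open>w = 1 + v\<^sup>2\<close>.\<close>

definition radial_defect ::
    "real \<Rightarrow> (real \<Rightarrow> real) \<Rightarrow> (real \<Rightarrow> real) \<Rightarrow> (real \<Rightarrow> real) \<Rightarrow> real \<Rightarrow> real"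
  where "radial_defect \<gamma> \<Phi> \<Phi>' \<Phi>'' w = \<gamma> * (\<gamma> + 1) / w * \<Phi> w - 2 * \<Phi>' w - 4 * (w - 1) * \<Phi>'' w"

lemma radial_has_derivative:
  assumes \<Phi>: "\<And>w. w > 0 \<Longrightarrow> (\<Phi> has_real_derivative \<Phi>' w) (at w)"
    and \<Phi>': "\<And>w. w > 0 \<Longrightarrow> (\<Phi>' has_real_derivative \<Phi>'' w) (at w)"
  shows "((\<lambda>x. \<Phi> (1 + x\<^sup>2)) has_real_derivative 2 * x * \<Phi>' (1 + x\<^sup>2)) (at x)"
    and "((\<lambda>x. 2 * x * \<Phi>' (1 + x\<^sup>2)) has_real_derivative
      2 * \<Phi>' (1 + x\<^sup>2) + 4 * x\<^sup>2 * \<Phi>'' (1 + x\<^sup>2)) (at x)"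
proof -
  have w_pos: "1 + x\<^sup>2 > 0"
    by (simp add: add_pos_nonneg)
  have inner: "((\<lambda>x. 1 + x\<^sup>2) has_real_derivative 2 * x) (at x)"
    by (auto intro!: derivative_eq_intros)
  show "((\<lambda>x. \<Phi> (1 + x\<^sup>2)) has_real_derivative 2 * x * \<Phi>' (1 + x\<^sup>2)) (at x)"
    using DERIV_chain2[OF \<Phi>[OF w_pos] inner] by (simp add: mult.commute)
  have "((\<lambda>x. 2 * x * \<Phi>' (1 + x\<^sup>2)) has_real_derivative
      2 * \<Phi>' (1 + x\<^sup>2) + 2 * x * (\<Phi>'' (1 + x\<^sup>2) * (2 * x))) (at x)"
    using DERIV_mult[OF DERIV_cmult[OF DERIV_ident] DERIV_chain2[OF \<Phi>'[OF w_pos] inner], of 2]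
    by (simp add: algebra_simps)
  then show "((\<lambda>x. 2 * x * \<Phi>' (1 + x\<^sup>2)) has_real_derivative
      2 * \<Phi>' (1 + x\<^sup>2) + 4 * x\<^sup>2 * \<Phi>'' (1 + x\<^sup>2)) (at x)"
    by (simp add: power2_eq_square algebra_simps)
qed

lemma Wt_mult_radial_minus_second_deriv:
  "Wt \<gamma> x * \<Phi> (1 + x\<^sup>2) - (2 * \<Phi>' (1 + x\<^sup>2) + 4 * x\<^sup>2 * \<Phi>'' (1 + x\<^sup>2))
    = radial_defect \<gamma> \<Phi> \<Phi>' \<Phi>'' (1 + x\<^sup>2)"
  by (simp add: Wt_def radial_defect_def algebra_simps)

lemma radial_comparison:
  assumes "schroedinger_solution (Wt \<gamma>) \<psi> \<psi>'" and "\<psi>' 0 = 0" and "\<And>x. x \<ge> 0 \<Longrightarrow> \<psi> x \<ge> 0"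
    and \<Phi>: "\<And>w. w > 0 \<Longrightarrow> (\<Phi> has_real_derivative \<Phi>' w) (at w)"
    and \<Phi>': "\<And>w. w > 0 \<Longrightarrow> (\<Phi>' has_real_derivative \<Phi>'' w) (at w)"
    and \<Phi>_pos: "\<And>w. w \<ge> 1 \<Longrightarrow> \<Phi> w > 0"
    and defect: "\<And>w. w \<ge> 1 \<Longrightarrow> s * radial_defect \<gamma> \<Phi> \<Phi>' \<Phi>'' w \<ge> 0"
    and "v \<ge> 0"
  shows "s * (\<psi> v / \<Phi> (1 + v\<^sup>2)) \<ge> s * (\<psi> 0 / \<Phi> 1)"
proof -
  have "s * (\<psi> v / (\<lambda>x. \<Phi> (1 + x\<^sup>2)) v) \<ge> s * (\<psi> 0 / (\<lambda>x. \<Phi> (1 + x\<^sup>2)) 0)"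
  proof (rule sturm_comparison[OF assms(1-3) radial_has_derivative[OF \<Phi> \<Phi>'] _ _ _ \<open>v \<ge> 0\<close>])
    show "s * (Wt \<gamma> x * \<Phi> (1 + x\<^sup>2) - (2 * \<Phi>' (1 + x\<^sup>2) + 4 * x\<^sup>2 * \<Phi>'' (1 + x\<^sup>2))) \<ge> 0" for x
      unfolding Wt_mult_radial_minus_second_deriv by (rule defect) simp
  qed (use \<Phi>_pos in auto)
  then show ?thesis by simp
qed

lemma DERIV_powr_divide:
  assumes "w > 0"
  shows "((\<lambda>w. w powr r) has_real_derivative r * w powr r / w) (at w)"
    and "((\<lambda>w. r * w powr r / w) has_real_derivative r * (r - 1) * w powr r / w\<^sup>2) (at w)"
  using DERIV_powr_over_power[OF assms, of r 0] DERIV_cmult[OF DERIV_powr_over_power[OF assms, of r 1], of r]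
  by (simp_all add: mult.assoc power2_eq_square)

lemma radial_defect_power:
  assumes "w > 0" and "r = (\<gamma> + 1) / 2"
  shows "radial_defect \<gamma> (\<lambda>w. w powr r) (\<lambda>w. r * w powr r / w) (\<lambda>w. r * (r - 1) * w powr r / w\<^sup>2) w
    = (\<gamma>\<^sup>2 - 1) * (w powr r / w\<^sup>2)"
  using assms(1) unfolding assms(2) by (simp add: radial_defect_def field_simps power2_eq_square)

lemma ratio_to_power_monotone:
  assumes "schroedinger_solution (Wt \<gamma>) \<psi> \<psi>'" and "\<psi>' 0 = 0" and "\<psi> 0 = 1"
    and "\<And>x. x \<ge> 0 \<Longrightarrow> \<psi> x \<ge> 0" and "s * (\<gamma>\<^sup>2 - 1) \<ge> 0" and "v \<ge> 0"
  shows "s * (\<psi> v / (1 + v\<^sup>2) powr ((\<gamma> + 1) / 2)) \<ge> s"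
proof -
  have "s * (\<psi> v / (\<lambda>w. w powr ((\<gamma> + 1) / 2)) (1 + v\<^sup>2)) \<ge> s * (\<psi> 0 / (\<lambda>w. w powr ((\<gamma> + 1) / 2)) 1)"
  proof (rule radial_comparison[OF assms(1,2,4) DERIV_powr_divide(1) DERIV_powr_divide(2) _ _ \<open>v \<ge> 0\<close>])
    show "s * radial_defect \<gamma> (\<lambda>w. w powr ((\<gamma> + 1) / 2)) (\<lambda>w. (\<gamma> + 1) / 2 * w powr ((\<gamma> + 1) / 2) / w)
      (\<lambda>w. (\<gamma> + 1) / 2 * ((\<gamma> + 1) / 2 - 1) * w powr ((\<gamma> + 1) / 2) / w\<^sup>2) w \<ge> 0" if "w \<ge> 1" for w
    proof -
      have "w > 0" using that by simp
      then show ?thesis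
        unfolding radial_defect_power[OF \<open>w > 0\<close> refl]
        using mult_nonneg_nonneg[OF assms(5), of "w powr ((\<gamma> + 1) / 2) / w\<^sup>2"] by (simp add: mult.assoc)
    qed
  qed auto
  then show ?thesis by (simp add: \<open>\<psi> 0 = 1\<close>)
qed

text \<open>In the two comparison functions below, \<open>a\<close> and \<open>b\<close> are chosen so that the
  \<open>w powr (r - 2)\<close> term of the radial defect cancels; for \<open>a\<close> this needs \<open>\<gamma> > 1/2\<close>.\<close>

lemma corrected_power_has_derivative:
  assumes "w > 0"
  shows "((\<lambda>w. w powr r + a * (w powr r / w)) has_real_derivative
      r * w powr r / w + a * ((r - 1) * w powr r / w\<^sup>2)) (at w)"
    and "((\<lambda>w. r * w powr r / w + a * ((r - 1) * w powr r / w\<^sup>2)) has_real_derivative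
      r * (r - 1) * w powr r / w\<^sup>2 + a * ((r - 1) * (r - 2) * w powr r / w ^ 3)) (at w)"
  using DERIV_add[OF DERIV_powr_over_power[OF assms, of r 0]
      DERIV_cmult[OF DERIV_powr_over_power[OF assms, of r 1], of a]]
    DERIV_add[OF DERIV_cmult[OF DERIV_powr_over_power[OF assms, of r 1], of r]
      DERIV_cmult[OF DERIV_cmult[OF DERIV_powr_over_power[OF assms, of r 2], of "r - 1"], of a]]
  by (simp_all add: mult.assoc power2_eq_square)

lemma radial_defect_corrected_power:
  assumes "w > 0" and r: "r = (\<gamma> + 1) / 2" and a: "a * (2 * (2 * \<gamma> - 1)) = 1 - \<gamma>\<^sup>2"
  shows "radial_defect \<gamma> (\<lambda>w. w powr r + a * (w powr r / w))
      (\<lambda>w. r * w powr r / w + a * ((r - 1) * w powr r / w\<^sup>2))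
      (\<lambda>w. r * (r - 1) * w powr r / w\<^sup>2 + a * ((r - 1) * (r - 2) * w powr r / w ^ 3)) w
    = a * (\<gamma> - 1) * (\<gamma> - 3) * (w powr r / w ^ 3)"
proof -
  define P where "P = w powr r"
  have "radial_defect \<gamma> (\<lambda>w. w powr r + a * (w powr r / w))
      (\<lambda>w. r * w powr r / w + a * ((r - 1) * w powr r / w\<^sup>2))
      (\<lambda>w. r * (r - 1) * w powr r / w\<^sup>2 + a * ((r - 1) * (r - 2) * w powr r / w ^ 3)) w
      - a * (\<gamma> - 1) * (\<gamma> - 3) * (P / w ^ 3) = (\<gamma>\<^sup>2 - 1 + a * (2 * (2 * \<gamma> - 1))) * P / w\<^sup>2"
    using \<open>w > 0\<close> unfolding radial_defect_def P_def[symmetric]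
    by (simp add: r field_simps power2_eq_square power3_eq_cube)
  then show ?thesis
    using a by (simp add: P_def)
qed

lemma power_lower_bound_if_le_1:
  assumes "schroedinger_solution (Wt \<gamma>) \<psi> \<psi>'" and "\<psi>' 0 = 0" and "\<psi> 0 = 1"
    and "\<And>x. x \<ge> 0 \<Longrightarrow> \<psi> x \<ge> 0" and "1/2 < \<gamma>" and "\<gamma> \<le> 1" and "v \<ge> 0"
  shows "\<psi> v \<ge> (1 + v\<^sup>2) powr ((\<gamma> + 1) / 2) / (1 + (1 - \<gamma>\<^sup>2) / (2 * (2 * \<gamma> - 1)))"
proof -
  define r where "r = (\<gamma> + 1) / 2"
  define a where "a = (1 - \<gamma>\<^sup>2) / (2 * (2 * \<gamma> - 1))"
  have "a \<ge> 0"
    using assms(5,6) by (simp add: a_def power_le_one)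
  have a: "a * (2 * (2 * \<gamma> - 1)) = 1 - \<gamma>\<^sup>2"
    using assms(5) by (simp add: a_def)
  define \<Phi> where "\<Phi> w = w powr r + a * (w powr r / w)" for w :: real
  have \<Phi>_ge: "\<Phi> w \<ge> w powr r" and \<Phi>_pos: "\<Phi> w > 0" if "w > 0" for w
    using \<open>a \<ge> 0\<close> that by (simp_all add: \<Phi>_def add_pos_nonneg)
  have "1 * (\<psi> v / \<Phi> (1 + v\<^sup>2)) \<ge> 1 * (\<psi> 0 / \<Phi> 1)"
    unfolding \<Phi>_def
  proof (rule radial_comparison[OF assms(1,2,4) corrected_power_has_derivative _ _ \<open>v \<ge> 0\<close>])
    show "w powr r + a * (w powr r / w) > 0" if "w \<ge> 1" for w
      using \<Phi>_pos[of w] that by (simp add: \<Phi>_def)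
    have "(\<gamma> - 1) * (\<gamma> - 3) \<ge> 0"
      using assms(6) by (simp add: mult_nonpos_nonpos)
    then show "1 * radial_defect \<gamma> (\<lambda>w. w powr r + a * (w powr r / w))
      (\<lambda>w. r * w powr r / w + a * ((r - 1) * w powr r / w\<^sup>2))
      (\<lambda>w. r * (r - 1) * w powr r / w\<^sup>2 + a * ((r - 1) * (r - 2) * w powr r / w ^ 3)) w \<ge> 0"
      if "w \<ge> 1" for w
    proof -
      have "w > 0" using that by simp
      have "0 \<le> a * ((\<gamma> - 1) * (\<gamma> - 3)) * (w powr r / w ^ 3)"
        by (rule mult_nonneg_nonneg[OF mult_nonneg_nonneg[OF \<open>a \<ge> 0\<close> \<open>(\<gamma> - 1) * (\<gamma> - 3) \<ge> 0\<close>]])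
          (use \<open>w > 0\<close> in simp)
      then show ?thesis
        unfolding radial_defect_corrected_power[OF \<open>w > 0\<close> r_def a] by (simp only: mult_1 mult.assoc)
    qed
  qed
  moreover have "\<Phi> (1 + v\<^sup>2) > 0"
    by (rule \<Phi>_pos) (simp add: add_pos_nonneg)
  ultimately have "\<Phi> (1 + v\<^sup>2) / (1 + a) \<le> \<psi> v"
    using \<open>a \<ge> 0\<close> \<open>\<psi> 0 = 1\<close> by (simp add: \<Phi>_def field_simps)
  moreover have "(1 + v\<^sup>2) powr r / (1 + a) \<le> \<Phi> (1 + v\<^sup>2) / (1 + a)"
    using \<Phi>_ge[of "1 + v\<^sup>2"] \<open>a \<ge> 0\<close> by (simp add: add_pos_nonneg divide_right_mono)
  ultimately show ?thesis
    by (simp add: r_def a_def)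
qed

lemma damped_power_has_derivative:
  assumes "w > 0"
  shows "((\<lambda>w. w powr r * exp (- b / w)) has_real_derivative
      exp (- b / w) * (r * (w powr r / w) + b * (w powr r / w\<^sup>2))) (at w)"
    and "((\<lambda>w. exp (- b / w) * (r * (w powr r / w) + b * (w powr r / w\<^sup>2))) has_real_derivative
      exp (- b / w) * (r * (r - 1) * (w powr r / w\<^sup>2) + 2 * b * (r - 1) * (w powr r / w ^ 3)
        + b\<^sup>2 * (w powr r / w ^ 4))) (at w)"
proof -
  have exp_deriv: "((\<lambda>w. exp (- b / w)) has_real_derivative exp (- b / w) * (b / w\<^sup>2)) (at w)"
    using assms by (auto intro!: derivative_eq_intros simp: power2_eq_square)
  have d1: "((\<lambda>w. w powr r / w) has_real_derivative (r - 1) * (w powr r / w\<^sup>2)) (at w)"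
    using DERIV_powr_over_power[OF assms, of r 1] by (simp add: power2_eq_square)
  have d2: "((\<lambda>w. w powr r / w\<^sup>2) has_real_derivative (r - 2) * (w powr r / w ^ 3)) (at w)"
    using DERIV_powr_over_power[OF assms, of r 2] by simp
  show "((\<lambda>w. w powr r * exp (- b / w)) has_real_derivative
      exp (- b / w) * (r * (w powr r / w) + b * (w powr r / w\<^sup>2))) (at w)"
    using DERIV_mult[OF DERIV_powr_over_power[OF assms, of r 0] exp_deriv] assms
    by (simp add: field_simps power2_eq_square)
  show "((\<lambda>w. exp (- b / w) * (r * (w powr r / w) + b * (w powr r / w\<^sup>2))) has_real_derivative
      exp (- b / w) * (r * (r - 1) * (w powr r / w\<^sup>2) + 2 * b * (r - 1) * (w powr r / w ^ 3)
        + b\<^sup>2 * (w powr r / w ^ 4))) (at w)"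
    by (rule DERIV_cong[OF DERIV_mult[OF exp_deriv DERIV_add[OF DERIV_cmult[OF d1] DERIV_cmult[OF d2]]]])
      (use assms in \<open>simp add: field_simps power2_eq_square power3_eq_cube power4_eq_xxxx\<close>)
qed

lemma radial_defect_damped_power:
  assumes "w > 0" and "r = (\<gamma> + 1) / 2" and "b = (\<gamma>\<^sup>2 - 1) / 2"
  shows "radial_defect \<gamma> (\<lambda>w. w powr r * exp (- b / w))
      (\<lambda>w. exp (- b / w) * (r * (w powr r / w) + b * (w powr r / w\<^sup>2)))
      (\<lambda>w. exp (- b / w) * (r * (r - 1) * (w powr r / w\<^sup>2) + 2 * b * (r - 1) * (w powr r / w ^ 3)
        + b\<^sup>2 * (w powr r / w ^ 4))) w
    = - (4 * b * (w - 1) * ((\<gamma> - 1) * w + b) * (w powr r * exp (- b / w) / w ^ 4))"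
  using assms(1) unfolding radial_defect_def assms(2,3)
  by (simp add: field_simps power2_eq_square power3_eq_cube power4_eq_xxxx)

lemma power_upper_bound_if_ge_1:
  assumes "schroedinger_solution (Wt \<gamma>) \<psi> \<psi>'" and "\<psi>' 0 = 0" and "\<psi> 0 = 1"
    and "\<And>x. x \<ge> 0 \<Longrightarrow> \<psi> x \<ge> 0" and "\<gamma> \<ge> 1" and "v \<ge> 0"
  shows "\<psi> v \<le> exp ((\<gamma>\<^sup>2 - 1) / 2) * (1 + v\<^sup>2) powr ((\<gamma> + 1) / 2)"
proof -
  define r where "r = (\<gamma> + 1) / 2"
  define b where "b = (\<gamma>\<^sup>2 - 1) / 2"
  have "b \<ge> 0"
    using assms(5) by (simp add: b_def one_le_power)
  define \<Phi> where "\<Phi> w = w powr r * exp (- b / w)" for w :: real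
  have "- 1 * (\<psi> v / \<Phi> (1 + v\<^sup>2)) \<ge> - 1 * (\<psi> 0 / \<Phi> 1)"
    unfolding \<Phi>_def
  proof (rule radial_comparison[OF assms(1,2,4) damped_power_has_derivative _ _ \<open>v \<ge> 0\<close>])
    show "w powr r * exp (- b / w) > 0" if "w \<ge> 1" for w
      using that by simp
    show "- 1 * radial_defect \<gamma> (\<lambda>w. w powr r * exp (- b / w))
      (\<lambda>w. exp (- b / w) * (r * (w powr r / w) + b * (w powr r / w\<^sup>2)))
      (\<lambda>w. exp (- b / w) * (r * (r - 1) * (w powr r / w\<^sup>2) + 2 * b * (r - 1) * (w powr r / w ^ 3)
        + b\<^sup>2 * (w powr r / w ^ 4))) w \<ge> 0" if "w \<ge> 1" for w
    proof -
      have "w > 0" using that by simp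
      then show ?thesis
        unfolding radial_defect_damped_power[OF \<open>w > 0\<close> r_def b_def]
        using that \<open>b \<ge> 0\<close> assms(5) by simp
    qed
  qed
  moreover have "1 + v\<^sup>2 > 0"
    by (simp add: add_pos_nonneg)
  then have "\<Phi> (1 + v\<^sup>2) > 0"
    by (simp add: \<Phi>_def)
  moreover have "\<Phi> 1 = exp (- b)"
    by (simp add: \<Phi>_def)
  ultimately have "\<psi> v \<le> \<Phi> (1 + v\<^sup>2) * exp b"
    using \<open>\<psi> 0 = 1\<close> by (simp add: field_simps exp_minus)
  also have "\<dots> \<le> (1 + v\<^sup>2) powr r * exp b"
    using \<open>b \<ge> 0\<close> \<open>1 + v\<^sup>2 > 0\<close> by (simp add: \<Phi>_def)
  finally show ?thesis by (simp add: r_def b_def mult.commute)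
qed

lemma power_growth_bounds:
  assumes "schroedinger_solution (Wt \<gamma>) \<psi> \<psi>'" and "\<psi>' 0 = 0" and "\<psi> 0 = 1"
    and "\<And>x. x \<ge> 0 \<Longrightarrow> \<psi> x \<ge> 0" and "\<gamma> > 1/2"
  shows "\<exists>m M. m > 0 \<and> (\<forall>v\<ge>0. m * (1 + v\<^sup>2) powr ((\<gamma> + 1) / 2) \<le> \<psi> v
    \<and> \<psi> v \<le> M * (1 + v\<^sup>2) powr ((\<gamma> + 1) / 2))"
proof -
  have pos: "(1 + v\<^sup>2) powr ((\<gamma> + 1) / 2) > 0" for v :: real
    using add_pos_nonneg[of 1 "v\<^sup>2"] by simp
  show ?thesis
  proof (cases "\<gamma> \<ge> 1")
  case True
  have "1 * (\<gamma>\<^sup>2 - 1) \<ge> 0"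
    using True by (simp add: one_le_power)
  then have "(1 + v\<^sup>2) powr ((\<gamma> + 1) / 2) \<le> \<psi> v" if "v \<ge> 0" for v
    using ratio_to_power_monotone[OF assms(1-4) _ that, of 1] pos[of v] by (simp add: field_simps)
  then show ?thesis
    using power_upper_bound_if_ge_1[OF assms(1-4) True]
    by (intro exI[of _ 1] exI[of _ "exp ((\<gamma>\<^sup>2 - 1) / 2)"]) auto
next
  case False
  have "- 1 * (\<gamma>\<^sup>2 - 1) \<ge> 0"
    using False assms(5) by (simp add: power_le_one)
  then have "\<psi> v \<le> 1 * (1 + v\<^sup>2) powr ((\<gamma> + 1) / 2)" if "v \<ge> 0" for v
    using ratio_to_power_monotone[OF assms(1-4) _ that, of "- 1"] pos[of v] by (simp add: field_simps)
  moreover have "1 + (1 - \<gamma>\<^sup>2) / (2 * (2 * \<gamma> - 1)) > 0"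
    using False assms(5) by (simp add: add_pos_nonneg power_le_one)
  ultimately show ?thesis
    using power_lower_bound_if_le_1[OF assms(1-5)] False
    by (intro exI[of _ "1 / (1 + (1 - \<gamma>\<^sup>2) / (2 * (2 * \<gamma> - 1)))"] exI[of _ 1]) auto
  qed
qed

section \<open>Asymptotics\<close>

lemma sqrt_one_plus_square_le:
  assumes "v \<ge> 1"
  shows "sqrt (1 + v\<^sup>2) \<le> 2 * v"
proof -
  have "1 \<le> v * v" using mult_mono[of 1 v 1 v] assms by simp
  then show ?thesis using assms by (intro real_le_lsqrt) (auto simp: power2_eq_square)
qed

lemma powr_half_exponent_square:
  fixes w \<gamma> :: real
  assumes "w > 0"
  shows "w powr ((\<gamma> + 1) / 2) * w powr ((\<gamma> + 1) / 2) = w powr (\<gamma> - 1/2) * w * sqrt w"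
proof -
  have "(\<gamma> + 1) / 2 + (\<gamma> + 1) / 2 = (\<gamma> - 1/2) + 1 + 1/2"
    by simp
  then have "w powr ((\<gamma> + 1) / 2) * w powr ((\<gamma> + 1) / 2) = w powr (\<gamma> - 1/2) * w powr 1 * w powr (1/2)"
    by (simp only: powr_add[symmetric])
  then show ?thesis
    using assms by (simp add: powr_half_sqrt)
qed

definition power_wronskian :: "real \<Rightarrow> (real \<Rightarrow> real) \<Rightarrow> (real \<Rightarrow> real) \<Rightarrow> real \<Rightarrow> real" where
  "power_wronskian r \<psi> \<psi>' v =
    \<psi>' v * (1 + v\<^sup>2) powr r - \<psi> v * (2 * v * (r * (1 + v\<^sup>2) powr r / (1 + v\<^sup>2)))"

lemma radial_power_has_derivative:
  "((\<lambda>v. (1 + v\<^sup>2) powr r) has_real_derivative 2 * v * (r * (1 + v\<^sup>2) powr r / (1 + v\<^sup>2))) (at v)"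
  using radial_has_derivative(1)[OF DERIV_powr_divide(1) DERIV_powr_divide(2)] .

lemma power_wronskian_has_derivative:
  assumes sol: "schroedinger_solution (Wt \<gamma>) \<psi> \<psi>'" and r: "r = (\<gamma> + 1) / 2"
  shows "(power_wronskian r \<psi> \<psi>' has_real_derivative
    \<psi> v * ((\<gamma>\<^sup>2 - 1) * ((1 + v\<^sup>2) powr r / (1 + v\<^sup>2)\<^sup>2))) (at v)"
proof -
  have "(power_wronskian r \<psi> \<psi>' has_real_derivative \<psi> v * (Wt \<gamma> v * (1 + v\<^sup>2) powr r
      - (2 * (r * (1 + v\<^sup>2) powr r / (1 + v\<^sup>2)) + 4 * v\<^sup>2 * (r * (r - 1) * (1 + v\<^sup>2) powr r / (1 + v\<^sup>2)\<^sup>2))))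
      (at v)"
    unfolding power_wronskian_def[abs_def]
    by (intro wronskian_has_derivative[OF sol] radial_has_derivative[OF DERIV_powr_divide(1) DERIV_powr_divide(2)])
  moreover have "Wt \<gamma> v * (1 + v\<^sup>2) powr r - (2 * (r * (1 + v\<^sup>2) powr r / (1 + v\<^sup>2))
      + 4 * v\<^sup>2 * (r * (r - 1) * (1 + v\<^sup>2) powr r / (1 + v\<^sup>2)\<^sup>2))
      = (\<gamma>\<^sup>2 - 1) * ((1 + v\<^sup>2) powr r / (1 + v\<^sup>2)\<^sup>2)"
    using Wt_mult_radial_minus_second_deriv[of \<gamma> v "\<lambda>w. w powr r" "\<lambda>w. r * w powr r / w"
        "\<lambda>w. r * (r - 1) * w powr r / w\<^sup>2"] radial_defect_power[OF _ r, of "1 + v\<^sup>2"]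
    by (simp add: add_pos_nonneg)
  ultimately show ?thesis by simp
qed

lemma power_wronskian_derivative_le:
  fixes y :: real
  assumes "\<gamma> > 1/2" and "v \<ge> 1" and "0 \<le> y" and y_le: "y \<le> M * (1 + v\<^sup>2) powr ((\<gamma> + 1) / 2)"
  shows "\<bar>y * ((\<gamma>\<^sup>2 - 1) * ((1 + v\<^sup>2) powr ((\<gamma> + 1) / 2) / (1 + v\<^sup>2)\<^sup>2))\<bar>
    \<le> \<bar>\<gamma>\<^sup>2 - 1\<bar> * M / (\<gamma> - 1/2) * (2 * v * ((\<gamma> - 1/2) * (1 + v\<^sup>2) powr (\<gamma> - 1/2) / (1 + v\<^sup>2)))"
proof -
  define w where "w = 1 + v\<^sup>2"
  have "w > 0" by (simp add: w_def add_pos_nonneg)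
  have "0 \<le> M * w powr ((\<gamma> + 1) / 2)"
    using assms(3,4) by (simp add: w_def)
  then have "M \<ge> 0"
    using \<open>w > 0\<close> by (simp add: zero_le_mult_iff)
  have "\<bar>y * ((\<gamma>\<^sup>2 - 1) * (w powr ((\<gamma> + 1) / 2) / w\<^sup>2))\<bar> = \<bar>\<gamma>\<^sup>2 - 1\<bar> * (y * w powr ((\<gamma> + 1) / 2)) / w\<^sup>2"
    using \<open>0 \<le> y\<close> by (simp add: abs_mult)
  also have "\<dots> \<le> \<bar>\<gamma>\<^sup>2 - 1\<bar> * (M * w powr ((\<gamma> + 1) / 2) * w powr ((\<gamma> + 1) / 2)) / w\<^sup>2"
    using y_le by (intro divide_right_mono mult_left_mono mult_right_mono) (auto simp: w_def)
  also have "\<dots> = \<bar>\<gamma>\<^sup>2 - 1\<bar> * M * w powr (\<gamma> - 1/2) * sqrt w / w"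
    using \<open>w > 0\<close> unfolding mult.assoc[of M] powr_half_exponent_square[OF \<open>w > 0\<close>]
    by (simp add: power2_eq_square)
  also have "\<dots> \<le> \<bar>\<gamma>\<^sup>2 - 1\<bar> * M * w powr (\<gamma> - 1/2) * (2 * v) / w"
    using sqrt_one_plus_square_le[OF \<open>v \<ge> 1\<close>] \<open>M \<ge> 0\<close> \<open>w > 0\<close>
    by (intro divide_right_mono mult_left_mono) (auto simp: w_def)
  also have "\<dots> = \<bar>\<gamma>\<^sup>2 - 1\<bar> * M / (\<gamma> - 1/2) * (2 * v * ((\<gamma> - 1/2) * w powr (\<gamma> - 1/2) / w))"
    using \<open>\<gamma> > 1/2\<close> by simp
  finally show ?thesis by (simp add: w_def)
qed

lemma power_wronskian_bound:
  assumes sol: "schroedinger_solution (Wt \<gamma>) \<psi> \<psi>'" and "\<gamma> > 1/2"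
    and bound: "\<And>v. v \<ge> 0 \<Longrightarrow> 0 \<le> \<psi> v \<and> \<psi> v \<le> M * (1 + v\<^sup>2) powr ((\<gamma> + 1) / 2)"
  shows "\<exists>K\<ge>0. \<forall>v\<ge>1. \<bar>power_wronskian ((\<gamma> + 1) / 2) \<psi> \<psi>' v\<bar> \<le> K * (1 + v\<^sup>2) powr (\<gamma> - 1/2)"
proof -
  define wr where "wr = power_wronskian ((\<gamma> + 1) / 2) \<psi> \<psi>'"
  define G where "G v = (1 + v\<^sup>2) powr (\<gamma> - 1/2)" for v :: real
  define K1 where "K1 = \<bar>\<gamma>\<^sup>2 - 1\<bar> * M / (\<gamma> - 1/2)"
  have "K1 \<ge> 0"
    using bound[of 0] \<open>\<gamma> > 1/2\<close> by (simp add: K1_def)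
  have G_ge_1: "G v \<ge> 1" for v
    using \<open>\<gamma> > 1/2\<close> by (simp add: G_def ge_one_powr_ge_zero)
  have "\<bar>wr v\<bar> \<le> (\<bar>wr 1\<bar> + K1) * G v" if "v \<ge> 1" for v
  proof -
    have "\<bar>wr v - wr 1\<bar> \<le> K1 * G v - K1 * G 1"
    proof (rule DERIV_abs_diff_le[OF that])
      show "(wr has_real_derivative \<psi> x * ((\<gamma>\<^sup>2 - 1) * ((1 + x\<^sup>2) powr ((\<gamma> + 1) / 2) / (1 + x\<^sup>2)\<^sup>2))) (at x)"
        for x unfolding wr_def using sol by (rule power_wronskian_has_derivative) simp
      show "((\<lambda>v. K1 * G v) has_real_derivative
          K1 * (2 * x * ((\<gamma> - 1/2) * (1 + x\<^sup>2) powr (\<gamma> - 1/2) / (1 + x\<^sup>2)))) (at x)" for x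
        unfolding G_def[abs_def] by (intro DERIV_cmult radial_power_has_derivative)
    qed (use power_wronskian_derivative_le \<open>\<gamma> > 1/2\<close> bound in \<open>simp add: K1_def\<close>)
    moreover have "K1 * G 1 \<ge> 0"
      using \<open>K1 \<ge> 0\<close> G_ge_1[of 1] by simp
    ultimately have "\<bar>wr v\<bar> \<le> \<bar>wr 1\<bar> + K1 * G v"
      using abs_triangle_ineq2[of "wr v" "wr 1"] by linarith
    also have "\<dots> \<le> (\<bar>wr 1\<bar> + K1) * G v"
      using G_ge_1[of v] by (simp add: distrib_right mult_le_cancel_left1)
    finally show ?thesis .
  qed
  then show ?thesis
    using \<open>K1 \<ge> 0\<close> by (intro exI[of _ "\<bar>wr 1\<bar> + K1"]) (simp add: wr_def G_def)
qed

lemma inverse_power_three_halves_le: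
  fixes K v :: real
  assumes "K \<ge> 0" and "v \<ge> 1"
  shows "K / ((1 + v\<^sup>2) * sqrt (1 + v\<^sup>2)) \<le> K * (2 * v) / (1 + v\<^sup>2)\<^sup>2"
proof -
  define w where "w = 1 + v\<^sup>2"
  have "w > 0" by (simp add: w_def add_pos_nonneg)
  have "w = sqrt w * sqrt w"
    using \<open>w > 0\<close> by simp
  also have "\<dots> \<le> 2 * v * sqrt w"
    using sqrt_one_plus_square_le[OF \<open>v \<ge> 1\<close>] by (intro mult_right_mono) (simp_all add: w_def)
  finally have "w \<le> 2 * v * sqrt w" .
  then have "K / (w * sqrt w) \<le> K * (2 * v) / w\<^sup>2"
    using \<open>K \<ge> 0\<close> \<open>w > 0\<close> by (simp add: divide_simps power2_eq_square mult_left_mono mult.assoc)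
  then show ?thesis
    by (simp add: w_def)
qed

lemma quotient_by_power_converges:
  assumes sol: "schroedinger_solution (Wt \<gamma>) \<psi> \<psi>'" and "\<gamma> > 1/2"
    and bound: "\<And>v. v \<ge> 0 \<Longrightarrow> 0 \<le> \<psi> v \<and> \<psi> v \<le> M * (1 + v\<^sup>2) powr ((\<gamma> + 1) / 2)"
  shows "\<exists>c K. \<forall>v\<ge>1. \<bar>\<psi> v / (1 + v\<^sup>2) powr ((\<gamma> + 1) / 2) - c\<bar> \<le> K / (1 + v\<^sup>2)"
proof -
  define r where "r = (\<gamma> + 1) / 2"
  define w where "w v = 1 + v\<^sup>2" for v :: real
  define wr where "wr = power_wronskian r \<psi> \<psi>'"
  obtain K where "K \<ge> 0" and wr_le: "\<And>v. v \<ge> 1 \<Longrightarrow> \<bar>wr v\<bar> \<le> K * w v powr (\<gamma> - 1/2)"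
    using power_wronskian_bound[OF assms] by (auto simp: wr_def r_def w_def)
  have w_pos: "w v > 0" for v
    by (simp add: w_def add_pos_nonneg)
  have quotient: "((\<lambda>v. \<psi> v / w v powr r) has_real_derivative wr v / (w v powr r * w v powr r)) (at v)" for v
    using DERIV_divide[OF _ radial_power_has_derivative, of \<psi> "\<psi>' v" v r] sol w_pos[of v]
    by (simp add: schroedinger_solution_def wr_def power_wronskian_def w_def)
  have rate: "((\<lambda>v. K / w v) has_real_derivative - (K * (2 * v) / (w v)\<^sup>2)) (at v)" for v
    using w_pos[of v] unfolding w_def by (auto intro!: derivative_eq_intros simp: power2_eq_square)
  have "\<bar>wr v / (w v powr r * w v powr r)\<bar> \<le> K * (2 * v) / (w v)\<^sup>2" if "v \<ge> 1" for v
  proof -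
    have "w v powr r * w v powr r = w v powr (\<gamma> - 1/2) * w v * sqrt (w v)"
      unfolding r_def using w_pos by (rule powr_half_exponent_square)
    then have "\<bar>wr v / (w v powr r * w v powr r)\<bar> = \<bar>wr v\<bar> / (w v powr (\<gamma> - 1/2) * w v * sqrt (w v))"
      using w_pos[of v] by simp
    also have "\<dots> \<le> K * w v powr (\<gamma> - 1/2) / (w v powr (\<gamma> - 1/2) * w v * sqrt (w v))"
      by (rule divide_right_mono[OF wr_le[OF that]]) (use w_pos[of v] in simp)
    also have "\<dots> = K / (w v * sqrt (w v))"
      using w_pos[of v] by simp
    also have "\<dots> \<le> K * (2 * v) / (w v)\<^sup>2"
      unfolding w_def using \<open>K \<ge> 0\<close> that by (rule inverse_power_three_halves_le)
    finally show ?thesis .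
  qed
  then have "\<exists>c. \<forall>v\<ge>1. \<bar>\<psi> v / w v powr r - c\<bar> \<le> K / w v"
    using \<open>K \<ge> 0\<close> w_pos by (intro DERIV_dominated_imp_limit_bound[OF quotient rate])
      (auto intro: divide_nonneg_pos)
  then show ?thesis
    by (auto simp: w_def r_def)
qed

lemma one_plus_powr_le:
  fixes x r :: real
  assumes "0 \<le> x" "x \<le> 1" and "r > 0"
  shows "(1 + x) powr r \<le> 1 + r * exp r * x"
proof -
  have "(1 + x) powr r = exp (r * ln (1 + x))"
    using assms by (simp add: powr_def)
  also have "\<dots> \<le> exp (r * x)"
    using assms by (simp add: ln_add_one_self_le_self)
  also have "\<dots> \<le> 1 + r * x * exp (r * x)"
    using exp_ge_add_one_self[of "- (r * x)"] by (simp add: exp_minus field_simps)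
  also have "\<dots> \<le> 1 + r * x * exp r"
    using assms by (intro add_left_mono mult_left_mono) (auto simp: mult_left_le)
  finally show ?thesis by (simp add: algebra_simps)
qed

lemma one_plus_square_powr:
  fixes v r :: real
  assumes "v > 0"
  shows "(1 + v\<^sup>2) powr r = v powr (2 * r) * (1 + 1 / v\<^sup>2) powr r"
proof -
  have "1 + v\<^sup>2 = v\<^sup>2 * (1 + 1 / v\<^sup>2)"
    using assms by (simp add: field_simps)
  then show ?thesis
    using assms by (simp add: powr_mult powr_powr[symmetric] powr_realpow)
qed

lemma relative_error_from_quotient_bound:
  fixes f c M K r v :: real
  assumes "c > 0" and "r > 0" and "v \<ge> 1" and "0 \<le> f" and "f \<le> M"
    and "\<bar>f - c\<bar> \<le> K / (1 + v\<^sup>2)"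
  shows "\<bar>f * (1 + v\<^sup>2) powr r / (c * v powr (2 * r)) - 1\<bar> \<le> (M * r * exp r + K) / c / v\<^sup>2"
proof -
  define x where "x = 1 / v\<^sup>2"
  have "1 \<le> v\<^sup>2"
    using \<open>v \<ge> 1\<close> by (simp add: one_le_power)
  then have "0 \<le> x" "x \<le> 1"
    by (simp_all add: x_def divide_le_eq_1)
  define A where "A = (1 + x) powr r"
  have "1 \<le> A" "A \<le> 1 + r * exp r * x"
    using \<open>0 \<le> x\<close> \<open>x \<le> 1\<close> \<open>r > 0\<close> one_plus_powr_le by (auto simp: A_def ge_one_powr_ge_zero)
  have "(1 + v\<^sup>2) powr r = v powr (2 * r) * A"
    using one_plus_square_powr[of v r] \<open>v \<ge> 1\<close> by (simp add: A_def x_def)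
  then have "\<bar>f * (1 + v\<^sup>2) powr r / (c * v powr (2 * r)) - 1\<bar> = \<bar>f * (A - 1) + (f - c)\<bar> / c"
    using \<open>c > 0\<close> \<open>v \<ge> 1\<close> by (simp add: field_simps)
  also have "\<dots> \<le> (M * (r * exp r * x) + K * x) / c"
  proof (rule divide_right_mono)
    have "\<bar>f * (A - 1)\<bar> \<le> M * (r * exp r * x)"
      using \<open>1 \<le> A\<close> \<open>A \<le> 1 + r * exp r * x\<close> \<open>0 \<le> f\<close> \<open>f \<le> M\<close>
      by (simp add: abs_mult) (intro mult_mono; simp)
    moreover have "K \<ge> 0"
      using order_trans[OF abs_ge_zero \<open>\<bar>f - c\<bar> \<le> K / (1 + v\<^sup>2)\<close>]
        add_pos_nonneg[of 1 "v\<^sup>2"] by (simp add: zero_le_divide_iff)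
    then have "K / (1 + v\<^sup>2) \<le> K / v\<^sup>2"
      using \<open>1 \<le> v\<^sup>2\<close> by (intro divide_left_mono mult_pos_pos) auto
    then have "K / (1 + v\<^sup>2) \<le> K * x"
      by (simp add: x_def)
    ultimately show "\<bar>f * (A - 1) + (f - c)\<bar> \<le> M * (r * exp r * x) + K * x"
      using \<open>\<bar>f - c\<bar> \<le> K / (1 + v\<^sup>2)\<close> abs_triangle_ineq[of "f * (A - 1)" "f - c"] by linarith
  qed (use \<open>c > 0\<close> in simp)
  also have "\<dots> = (M * r * exp r + K) / c / v\<^sup>2"
    using \<open>c > 0\<close> \<open>v \<ge> 1\<close> by (simp add: x_def field_simps)
  finally show ?thesis .
qed

lemma limit_pos_if_bounded_below:
  fixes f :: "real \<Rightarrow> real"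
  assumes "m > 0" and below: "\<And>v. v \<ge> 1 \<Longrightarrow> m \<le> f v"
    and limit: "\<And>v. v \<ge> 1 \<Longrightarrow> \<bar>f v - c\<bar> \<le> K / (1 + v\<^sup>2)"
  shows "c > 0"
proof -
  define v0 where "v0 = max 1 (2 * K / m)"
  have "v0 \<ge> 1" by (simp add: v0_def)
  have "K \<ge> 0"
    using order_trans[OF abs_ge_zero limit[of 1]] by simp
  have "v0 \<le> v0 * v0"
    using mult_left_mono[of 1 v0 v0] \<open>v0 \<ge> 1\<close> by simp
  then have "v0 \<le> 1 + v0\<^sup>2"
    unfolding power2_eq_square by linarith
  then have "K / (1 + v0\<^sup>2) \<le> K / v0"
    using \<open>K \<ge> 0\<close> \<open>v0 \<ge> 1\<close> by (intro divide_left_mono) auto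
  also have "\<dots> \<le> m / 2"
  proof -
    have "2 * K / m \<le> v0"
      by (simp add: v0_def)
    then have "2 * K \<le> m * v0"
      using \<open>m > 0\<close> by (simp add: divide_le_eq mult.commute)
    then show ?thesis using \<open>v0 \<ge> 1\<close> by (simp add: pos_divide_le_eq)
  qed
  finally have "K / (1 + v0\<^sup>2) \<le> m / 2" .
  moreover have "f v0 - c \<le> K / (1 + v0\<^sup>2)"
    using limit[OF \<open>v0 \<ge> 1\<close>] by (rule order_trans[OF abs_ge_self])
  ultimately show ?thesis
    using below[OF \<open>v0 \<ge> 1\<close>] \<open>m > 0\<close> by linarith
qed

lemma asymptotic_expansion:
  assumes sol: "schroedinger_solution (Wt \<gamma>) \<psi> \<psi>'" and "\<psi>' 0 = 0" and "\<psi> 0 = 1"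
    and pos: "\<And>x. \<psi> x > 0" and "\<gamma> > 1/2"
  shows "\<exists>c>0. \<exists>C. \<forall>v\<ge>1. \<bar>\<psi> v / (c * v powr (\<gamma> + 1)) - 1\<bar> \<le> C / v\<^sup>2"
proof -
  define r where "r = (\<gamma> + 1) / 2"
  define f where "f v = \<psi> v / (1 + v\<^sup>2) powr r" for v
  have P_pos: "(1 + v\<^sup>2) powr r > 0" for v :: real
    using add_pos_nonneg[of 1 "v\<^sup>2"] by simp
  obtain m M where "m > 0"
    and bounds: "\<And>v. v \<ge> 0 \<Longrightarrow> m * (1 + v\<^sup>2) powr r \<le> \<psi> v \<and> \<psi> v \<le> M * (1 + v\<^sup>2) powr r"
    using power_growth_bounds[OF assms(1-3) _ \<open>\<gamma> > 1/2\<close>] pos by (auto simp: r_def less_imp_le)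
  then have f_bounds: "m \<le> f v" "f v \<le> M" if "v \<ge> 0" for v
    using that P_pos by (simp_all add: f_def le_divide_eq divide_le_eq)
  obtain c K where cK: "\<And>v. v \<ge> 1 \<Longrightarrow> \<bar>f v - c\<bar> \<le> K / (1 + v\<^sup>2)"
    using quotient_by_power_converges[OF sol \<open>\<gamma> > 1/2\<close>, of M] bounds pos
    by (auto simp: f_def r_def less_imp_le)
  have "c > 0"
    using \<open>m > 0\<close> f_bounds(1) cK by (rule limit_pos_if_bounded_below) auto
  have "\<bar>\<psi> v / (c * v powr (\<gamma> + 1)) - 1\<bar> \<le> (M * r * exp r + K) / c / v\<^sup>2" if "v \<ge> 1" for v
  proof -
    have "r > 0"
      using \<open>\<gamma> > 1/2\<close> by (simp add: r_def)
    moreover have "0 \<le> f v" "f v \<le> M"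
      using f_bounds[of v] \<open>m > 0\<close> that by auto
    moreover have "\<psi> v = f v * (1 + v\<^sup>2) powr r"
      using P_pos[of v] by (simp add: f_def)
    moreover have "\<gamma> + 1 = 2 * r"
      by (simp add: r_def)
    ultimately show ?thesis
      using relative_error_from_quotient_bound[OF \<open>c > 0\<close> _ that _ _ cK[OF that]] by (simp only:)
  qed
  then show ?thesis
    using \<open>c > 0\<close> by blast
qed

section \<open>The Cauchy problem for \<open>L0\<close>\<close>

lemma Wt_nonneg: "\<gamma> \<ge> 0 \<Longrightarrow> Wt \<gamma> x \<ge> 0"
  by (simp add: Wt_def add_pos_nonneg)

lemma abs_Wt_le:
  assumes "\<gamma> \<ge> 0"
  shows "\<bar>Wt \<gamma> x\<bar> \<le> \<gamma> * (\<gamma> + 1)"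
proof -
  have "\<gamma> * (\<gamma> + 1) \<ge> 0" using assms by simp
  then show ?thesis by (simp add: Wt_def add_pos_nonneg divide_le_eq mult_le_cancel_left1)
qed

lemma Wt_minus: "Wt \<gamma> (- x) = Wt \<gamma> x"
  by (simp add: Wt_def)

lemma continuous_on_Wt: "continuous_on UNIV (Wt \<gamma>)"
  unfolding Wt_def[abs_def] by (intro continuous_intros) (simp add: add_nonneg_eq_0_iff)

definition positive_cauchy_solution :: "real \<Rightarrow> (real \<Rightarrow> real) \<Rightarrow> bool" where
  "positive_cauchy_solution \<gamma> \<psi> \<longleftrightarrow>
    smooth_real \<psi> \<and> (\<forall>v. \<psi> v > 0) \<and> (\<forall>v. L0 \<gamma> \<psi> v = 0) \<and> \<psi> 0 = 1 \<and> deriv \<psi> 0 = 0"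

lemma positive_cauchy_solution_exists:
  assumes "\<gamma> \<ge> 0"
  shows "positive_cauchy_solution \<gamma> (picard_solution (Wt \<gamma>))"
proof -
  note sol = schroedinger_solution_picard[OF continuous_on_Wt abs_Wt_le[OF assms]]
  have "Wt \<gamma> = (\<lambda>x. \<gamma> * (\<gamma> + 1) / (1 + x\<^sup>2))"
    by (simp add: Wt_def fun_eq_iff)
  then have "smooth_real (picard_solution (Wt \<gamma>))"
    using sol by (metis smooth_real_if_schroedinger_solution)
  moreover have "picard_solution (Wt \<gamma>) v > 0" for v
    using picard_solution_ge_1[OF continuous_on_Wt abs_Wt_le[OF assms] Wt_nonneg[OF assms], of v] by simp
  ultimately show ?thesis
    using L0_eq_0_if_schroedinger_solution[OF sol]
      picard_solution_at_0[OF continuous_on_Wt abs_Wt_le[OF assms]]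
      picard_solution_deriv_at_0[OF continuous_on_Wt abs_Wt_le[OF assms]]
    by (simp add: positive_cauchy_solution_def)
qed

lemma positive_cauchy_solution_schroedinger:
  assumes "positive_cauchy_solution \<gamma> \<psi>"
  shows "schroedinger_solution (Wt \<gamma>) \<psi> (deriv \<psi>)"
  using assms schroedinger_solution_if_L0_eq_0 by (auto simp: positive_cauchy_solution_def)

lemma positive_cauchy_solution_unique:
  assumes "\<gamma> \<ge> 0" and "positive_cauchy_solution \<gamma> \<psi>" and "positive_cauchy_solution \<gamma> \<phi>"
  shows "\<psi> = \<phi>"
proof
  fix x
  have "\<psi> x - \<phi> x = 0"
    using schroedinger_solution_eq_0[OF schroedinger_solution_diff[OF
        positive_cauchy_solution_schroedinger[OF assms(2)] positive_cauchy_solution_schroedinger[OF assms(3)]]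
        abs_Wt_le[OF assms(1)]] assms(2,3)
    by (simp add: positive_cauchy_solution_def)
  then show "\<psi> x = \<phi> x" by simp
qed

lemma positive_cauchy_solution_even:
  assumes "\<gamma> \<ge> 0" and "positive_cauchy_solution \<gamma> \<psi>"
  shows "\<psi> (- v) = \<psi> v"
proof -
  note sol = positive_cauchy_solution_schroedinger[OF assms(2)]
  have "\<psi> v - \<psi> (- v) = 0"
    using schroedinger_solution_eq_0[OF schroedinger_solution_diff[OF sol
        schroedinger_solution_reflect[OF Wt_minus sol]] abs_Wt_le[OF assms(1)]] assms(2)
    by (simp add: positive_cauchy_solution_def)
  then show ?thesis by simp
qed

lemma positive_cauchy_solution_expansion:
  assumes "\<gamma> > 1/2" and "positive_cauchy_solution \<gamma> \<psi>"
  shows "\<exists>c>0. \<exists>R. (\<exists>B. \<forall>v\<ge>1. \<bar>R v\<bar> \<le> B) \<and> R \<in> O[at_top](\<lambda>v. 1 / v\<^sup>2)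
    \<and> (\<forall>v. \<bar>v\<bar> \<ge> 1 \<longrightarrow> \<psi> v = c * \<bar>v\<bar> powr (\<gamma> + 1) * (1 + R \<bar>v\<bar>))"
proof -
  obtain c C where "c > 0" and C: "\<And>v. v \<ge> 1 \<Longrightarrow> \<bar>\<psi> v / (c * v powr (\<gamma> + 1)) - 1\<bar> \<le> C / v\<^sup>2"
    using asymptotic_expansion[OF positive_cauchy_solution_schroedinger[OF assms(2)]] assms
    by (auto simp: positive_cauchy_solution_def)
  define R where "R v = \<psi> v / (c * v powr (\<gamma> + 1)) - 1" for v
  have "\<bar>R v\<bar> \<le> \<bar>C\<bar>" if "v \<ge> 1" for v
  proof -
    have "C / v\<^sup>2 \<le> \<bar>C\<bar> / 1"
      using that by (intro frac_le) (auto simp: one_le_power)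
    then show ?thesis using C[OF that] by (simp add: R_def)
  qed
  moreover have "R \<in> O[at_top](\<lambda>v. 1 / v\<^sup>2)"
  proof (rule bigoI[of _ "\<bar>C\<bar>"])
    show "\<forall>\<^sub>F v in at_top. norm (R v) \<le> \<bar>C\<bar> * norm (1 / v\<^sup>2)"
      using eventually_ge_at_top[of "1 :: real"]
    proof eventually_elim
      case (elim v)
      have "C / v\<^sup>2 \<le> \<bar>C\<bar> / v\<^sup>2"
        by (simp add: divide_right_mono)
      then show ?case
        using C[OF elim] by (simp add: R_def)
    qed
  qed
  moreover have "\<psi> v = c * \<bar>v\<bar> powr (\<gamma> + 1) * (1 + R \<bar>v\<bar>)" if "\<bar>v\<bar> \<ge> 1" for v
  proof -
    have "\<psi> v = \<psi> \<bar>v\<bar>"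
      using positive_cauchy_solution_even[of \<gamma> \<psi> v] assms by (cases "v \<ge> 0") auto
    then show ?thesis
      using that \<open>c > 0\<close> by (simp add: R_def)
  qed
  ultimately show ?thesis
    using \<open>c > 0\<close> by blast
qed

lemma positive_cauchy_solution_ex1:
  assumes "\<gamma> \<ge> 0"
  shows "\<exists>!\<psi>. positive_cauchy_solution \<gamma> \<psi>"
proof (rule ex1I)
  show "positive_cauchy_solution \<gamma> (picard_solution (Wt \<gamma>))"
    using assms by (rule positive_cauchy_solution_exists)
  show "\<phi> = picard_solution (Wt \<gamma>)" if "positive_cauchy_solution \<gamma> \<phi>" for \<phi>
    using assms that \<open>positive_cauchy_solution \<gamma> (picard_solution (Wt \<gamma>))\<close>
    by (rule positive_cauchy_solution_unique)
qed

lemma positive_cauchy_solution_asymptotics: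
  assumes "\<gamma> > 1/2" and sol: "positive_cauchy_solution \<gamma> \<psi>"
  shows "\<exists>v0>0. \<exists>c>0. \<exists>R. (\<exists>B. \<forall>v\<ge>v0. \<bar>R v\<bar> \<le> B) \<and> R \<in> O[at_top](\<lambda>v. 1 / v\<^sup>2)
      \<and> (\<forall>v. \<bar>v\<bar> \<ge> v0 \<longrightarrow> \<psi> v = c * \<bar>v\<bar> powr (\<gamma> + 1) * (1 + R \<bar>v\<bar>))
      \<and> (\<forall>R'. (\<exists>B. \<forall>v\<ge>v0. \<bar>R' v\<bar> \<le> B) \<and> R' \<in> O[at_top](\<lambda>v. 1 / v\<^sup>2)
          \<and> (\<forall>v. \<bar>v\<bar> \<ge> v0 \<longrightarrow> \<psi> v = c * \<bar>v\<bar> powr (\<gamma> + 1) * (1 + R' \<bar>v\<bar>))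
        \<longrightarrow> (\<forall>v\<ge>v0. R' v = R v))"
proof -
  obtain c R where "c > 0" and R: "\<exists>B. \<forall>v\<ge>1. \<bar>R v\<bar> \<le> B" "R \<in> O[at_top](\<lambda>v. 1 / v\<^sup>2)"
    and expansion: "\<forall>v. \<bar>v\<bar> \<ge> 1 \<longrightarrow> \<psi> v = c * \<bar>v\<bar> powr (\<gamma> + 1) * (1 + R \<bar>v\<bar>)"
    using positive_cauchy_solution_expansion[OF assms] by blast
  have "R' v = R v"
    if "\<forall>v. \<bar>v\<bar> \<ge> 1 \<longrightarrow> \<psi> v = c * \<bar>v\<bar> powr (\<gamma> + 1) * (1 + R' \<bar>v\<bar>)" and "v \<ge> 1" for R' v
  proof -
    have "\<psi> v = c * v powr (\<gamma> + 1) * (1 + R' v)" "\<psi> v = c * v powr (\<gamma> + 1) * (1 + R v)"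
      using that(1)[rule_format, of v] expansion[rule_format, of v] \<open>v \<ge> 1\<close> by simp_all
    then have "c * v powr (\<gamma> + 1) * (1 + R' v) = c * v powr (\<gamma> + 1) * (1 + R v)"
      by (rule trans[OF sym])
    moreover have "c * v powr (\<gamma> + 1) \<noteq> 0"
      using \<open>c > 0\<close> \<open>v \<ge> 1\<close> by simp
    ultimately show ?thesis by simp
  qed
  then have uniq: "\<forall>R'. (\<exists>B. \<forall>v\<ge>1. \<bar>R' v\<bar> \<le> B) \<and> R' \<in> O[at_top](\<lambda>v. 1 / v\<^sup>2)
      \<and> (\<forall>v. \<bar>v\<bar> \<ge> 1 \<longrightarrow> \<psi> v = c * \<bar>v\<bar> powr (\<gamma> + 1) * (1 + R' \<bar>v\<bar>)) \<longrightarrow> (\<forall>v\<ge>1. R' v = R v)"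
    by blast
  show ?thesis
    by (rule exI[of _ 1], rule conjI[OF zero_less_one], rule exI[of _ c], rule conjI[OF \<open>c > 0\<close>],
        rule exI[of _ R], intro conjI R expansion uniq)
qed

theorem lemma2p2:
  fixes \<gamma> :: real
  assumes "\<gamma> > 1/2"
  shows "(\<exists>!\<psi>. smooth_real \<psi> \<and> (\<forall>v. \<psi> v > 0) \<and> (\<forall>v. L0 \<gamma> \<psi> v = 0)
                \<and> \<psi> 0 = 1 \<and> deriv \<psi> 0 = 0)
       \<and> (\<forall>\<psi>. smooth_real \<psi> \<and> (\<forall>v. \<psi> v > 0) \<and> (\<forall>v. L0 \<gamma> \<psi> v = 0)
                \<and> \<psi> 0 = 1 \<and> deriv \<psi> 0 = 0 \<longrightarrow>
            (\<forall>v. \<psi> (-v) = \<psi> v \<and> \<psi> v > 0) \<and>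
            (\<exists>v0 > 0. \<exists>c > 0. \<exists>R :: real \<Rightarrow> real.
                (\<exists>B. \<forall>v\<ge>v0. \<bar>R v\<bar> \<le> B) \<and>
                R \<in> O[at_top](\<lambda>v. 1 / v^2) \<and>
                (\<forall>v. \<bar>v\<bar> \<ge> v0 \<longrightarrow> \<psi> v = c * \<bar>v\<bar> powr (\<gamma> + 1) * (1 + R \<bar>v\<bar>)) \<and>
                (\<forall>R' :: real \<Rightarrow> real.
                   (\<exists>B. \<forall>v\<ge>v0. \<bar>R' v\<bar> \<le> B) \<and>
                   R' \<in> O[at_top](\<lambda>v. 1 / v^2) \<and>
                   (\<forall>v. \<bar>v\<bar> \<ge> v0 \<longrightarrow> \<psi> v = c * \<bar>v\<bar> powr (\<gamma> + 1) * (1 + R' \<bar>v\<bar>))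
                   \<longrightarrow> (\<forall>v\<ge>v0. R' v = R v))))"
proof -
  have "\<gamma> \<ge> 0" using assms by simp
  show ?thesis
    unfolding positive_cauchy_solution_def[symmetric]
    using positive_cauchy_solution_ex1[OF \<open>\<gamma> \<ge> 0\<close>] positive_cauchy_solution_even[OF \<open>\<gamma> \<ge> 0\<close>]
      positive_cauchy_solution_asymptotics[OF assms]
    by (auto simp: positive_cauchy_solution_def)
qed

end
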